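(* Let $(\Omega,\mathcal F,\mu)$ be a finite measure space, $p\in[1,\infty)$ and $f\in L^p(\Omega,\mathcal F,\mu)$. Let $\mathfrak a_f\le\mathfrak b_f$ be the endpoints of the convex support of the distribution $\mu_f=\mu\circ f^{-1}$. Assume $\mu_f$ has a density $\Psi$ with respect to Lebesgue measure with $\Psi>0$ on $(\mathfrak a_f,\mathfrak b_f)$ and $\Psi=0$ outside. For $s\in(0,\mathfrak b_f-\mathfrak a_f)$ let $G_s:(\mathfrak a_f,\mathfrak b_f)\to[0,\infty)$, $G_s(y)=\Psi(y+s)/\Psi(y)$, and assume every $G_s$ is nonincreasing. Assume moreover one of: (H1) $\mathfrak a_f$ or $\mathfrak b_f$ is finite; (H2) for every $s\in(0,\mathfrak b_f-\mathfrak a_f)$, $G_s((\mathfrak a_f,\mathfrak b_f))$ is an infinite set; (H3) $\Psi$ is continuous. Then for every $k\ge1$ there is a unique minimizer of $\|f-g\|_p$ over $g\in\mathscr G_{p,k}$ (unique as an element of $L^p$).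
   Context: $\mathscr G_{p,k}$ is the set of functions $\sum_{i=1}^l a_i\mathbf 1_{A_i}\in L^p$ with $l\le k$, $\{A_i\}$ a measurable partition of $\Omega$, $a_i\in\mathbb R$. The cumulative distribution function is $F_f(x)=\mu(f^{-1}((-\infty,x]))$, and $\mathfrak a_f=\sup\{z:F_f(z)=0\}$, $\mathfrak b_f=\inf\{z:F_f(z)=\mu(\Omega)\}$ (possibly infinite). *)

theory Defs
  imports "HOL-Analysis.Analysis"
begin

definition Gpk :: "'a measure \<Rightarrow> nat \<Rightarrow> ('a \<Rightarrow> real) set" where
  "Gpk M k = {g. \<exists>l A a. l \<le> k \<and> (\<forall>i<l. A i \<in> sets M) \<and>
      disjoint_family_on A {..<l} \<and> (\<Union>i<l. A i) = space M \<and>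
      (\<forall>x\<in>space M. g x = (\<Sum>i<l. (a i :: real) * indicator (A i) x))}"

definition in_Lp :: "'a measure \<Rightarrow> real \<Rightarrow> ('a \<Rightarrow> real) \<Rightarrow> bool" where
  "in_Lp M p f \<longleftrightarrow> f \<in> borel_measurable M \<and> integrable M (\<lambda>x. \<bar>f x\<bar> powr p)"

definition Lp_norm :: "'a measure \<Rightarrow> real \<Rightarrow> ('a \<Rightarrow> real) \<Rightarrow> real" where
  "Lp_norm M p f = (\<integral>x. \<bar>f x\<bar> powr p \<partial>M) powr (1 / p)"

definition cdf_of :: "'a measure \<Rightarrow> ('a \<Rightarrow> real) \<Rightarrow> real \<Rightarrow> real" where
  "cdf_of M f x = measure M {\<omega> \<in> space M. f \<omega> \<le> x}"

definition lo_end :: "'a measure \<Rightarrow> ('a \<Rightarrow> real) \<Rightarrow> ereal" where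
  "lo_end M f = Sup (ereal ` {z. cdf_of M f z = 0})"

definition hi_end :: "'a measure \<Rightarrow> ('a \<Rightarrow> real) \<Rightarrow> ereal" where
  "hi_end M f = Inf (ereal ` {z. cdf_of M f z = measure M (space M)})"

definition Gs :: "(real \<Rightarrow> real) \<Rightarrow> real \<Rightarrow> real \<Rightarrow> real" where
  "Gs \<Psi> s y = \<Psi> (y + s) / \<Psi> y"

end

theory Submission
  imports Defs "HOL-Analysis.Analysis"
begin

text \<open>
  For a step function h with at most k values, the L^p distance of f to h is at least the
  quantization error of the set V of values of h, i.e. the integral of dist(y, V)^p against the
  density of f, with equality when h maps each point to a nearest element of V. So best
  approximations come from optimal codebooks of k points, and two of them agree almost everywhere
  because f almost surely avoids the finitely many midpoints of V. Optimal codebooks exist by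
  compactness: points escaping to infinity make the error unbounded, and Fatou's lemma bounds the
  error of the limit codebook.

  Every point of an optimal codebook is a p-centre of the density restricted to its Voronoi cell.
  Given two optimal codebooks, the second lying to the right, the first-order condition for
  p-centres together with the monotonicity of the ratios G_s forces all cells to be translated by
  the same E, with the density proportional to its own translate on every cell. For E > 0 this
  requires an unbounded support on which G_E takes finitely many values, which each of (H1), (H2)
  and (H3) excludes; under (H3) because a continuous positive density with
  \<Psi>(y + E) = c \<Psi>(y) cannot be integrable.
\<close>

lemma powr_sum_le:
  fixes u v p :: real assumes "u \<ge> 0" "v \<ge> 0" "p \<ge> 0"
  shows "(u + v) powr p \<le> 2 powr p * (u powr p + v powr p)"
proof -
  have "(u+v) powr p \<le> (2 * max u v) powr p" by (rule powr_mono2) (use assms in auto)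
  also have "\<dots> = 2 powr p * max u v powr p" using assms by (simp add: powr_mult)
  also have "max u v powr p \<le> u powr p + v powr p" by (cases "u \<le> v") (auto simp: max_def)
  hence "2 powr p * max u v powr p \<le> 2 powr p * (u powr p + v powr p)" by (intro mult_left_mono) auto
  finally show ?thesis .
qed

lemma powr_le_1_plus:
  fixes z q :: real assumes "z \<ge> 0" "0 \<le> q" "q \<le> p"
  shows "z powr q \<le> 1 + z powr p"
proof (cases "z \<le> 1")
  case True
  hence "z powr q \<le> 1" using assms by (simp add: powr_le1)
  then show ?thesis by (smt (verit) powr_ge_zero)
next
  case False
  hence "z powr q \<le> z powr p" using assms by (intro powr_mono) auto
  then show ?thesis by simp
qed

lemma AE_lborel_Ioo_False:
  assumes "AE y in lborel. \<not> (\<alpha> < y \<and> y < (\<beta>::real))" "\<alpha> < \<beta>"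
  shows False
proof -
  have "emeasure lborel {\<alpha><..<\<beta>} = 0"
    using assms(1) by (subst (asm) AE_iff_measurable[of "{\<alpha><..<\<beta>}"]) auto
  then show False using assms(2) by simp
qed

lemma AE_lborel_Ioo_ex: assumes "AE y in lborel. P y" "\<alpha> < (\<beta>::real)" shows "\<exists>y. \<alpha> < y \<and> y < \<beta> \<and> P y"
proof (rule ccontr)
  assume "\<not> ?thesis"
  hence "AE y in lborel. \<not> (\<alpha> < y \<and> y < \<beta>)" using assms(1) by (auto elim: eventually_mono)
  then show False using assms(2) AE_lborel_Ioo_False by blast
qed

lemma AE_lborel_Ioo_contra:
  assumes "AE y in lborel. P y" "\<alpha> < (\<beta>::real)" "\<And>y. \<alpha> < y \<Longrightarrow> y < \<beta> \<Longrightarrow> \<not> P y" shows False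
  using AE_lborel_Ioo_ex[OF assms(1,2)] assms(3) by blast

lemma integral_less_if_less_on_Ioo:
  fixes f g :: "real \<Rightarrow> real"
  assumes f: "integrable lborel f" and g: "integrable lborel g" and le: "\<And>y. f y \<le> g y"
    and less: "\<And>y. \<alpha> < y \<Longrightarrow> y < \<beta> \<Longrightarrow> f y < g y" and "\<alpha> < \<beta>"
  shows "(\<integral>y. f y \<partial>lborel) < (\<integral>y. g y \<partial>lborel)"
proof -
  have "(\<integral>y. f y \<partial>lborel) \<le> (\<integral>y. g y \<partial>lborel)" by (rule integral_mono[OF f g le])
  moreover have "(\<integral>y. f y \<partial>lborel) \<noteq> (\<integral>y. g y \<partial>lborel)"
  proof
    assume "(\<integral>y. f y \<partial>lborel) = (\<integral>y. g y \<partial>lborel)"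
    then have "(\<integral>y. g y - f y \<partial>lborel) = 0" using Bochner_Integration.integral_diff[OF g f] by simp
    then have "AE y in lborel. g y - f y = 0"
      using f g le by (subst (asm) integral_nonneg_eq_0_iff_AE) auto
    then show False using AE_lborel_Ioo_contra[OF _ \<open>\<alpha> < \<beta>\<close>] less by force
  qed
  ultimately show ?thesis by simp
qed

lemma ereal_shift_less: "a < ereal u \<Longrightarrow> ereal (u + e) < b \<Longrightarrow> ereal e < b - a"
  by (cases a; cases b) auto

lemma ereal_less_shift: "ereal (y + e) < R + ereal e \<Longrightarrow> ereal y < R"
  by (cases R) auto

lemma ereal_le_shift: "L' \<le> L + ereal e \<Longrightarrow> L \<le> ereal y \<Longrightarrow> L' \<le> ereal (y + e)"
proof -
  assume "L' \<le> L + ereal e" "L \<le> ereal y"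
  moreover have "L + ereal e \<le> ereal y + ereal e" using \<open>L \<le> ereal y\<close> by (intro add_right_mono)
  ultimately show ?thesis by simp
qed

lemma ereal_between_left: assumes "a < ereal y0" "0 < (\<epsilon>::real)"
  shows "\<exists>\<alpha>. a < ereal \<alpha> \<and> y0 - \<epsilon> < \<alpha> \<and> \<alpha> < y0"
proof -
  have "max a (ereal (y0 - \<epsilon>)) < ereal y0" using assms by auto
  then obtain z where "max a (ereal (y0 - \<epsilon>)) < ereal z" "ereal z < ereal y0" using ereal_dense2 by blast
  then show ?thesis by auto
qed

lemma ereal_between_right: assumes "ereal y0 < b" "0 < (\<epsilon>::real)"
  shows "\<exists>\<beta>. ereal \<beta> < b \<and> \<beta> < y0 + \<epsilon> \<and> y0 < \<beta>"
proof -
  have "ereal y0 < min b (ereal (y0 + \<epsilon>))" using assms by auto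
  then obtain z where "ereal y0 < ereal z" "ereal z < min b (ereal (y0 + \<epsilon>))" using ereal_dense2 by blast
  then show ?thesis by auto
qed

lemma ereal_two_between: assumes "x < (y::ereal)" shows "\<exists>\<alpha> \<beta>. x < ereal \<alpha> \<and> \<alpha> < \<beta> \<and> ereal \<beta> < y"
proof -
  obtain z where z: "x < ereal z" "ereal z < y" using ereal_dense2[OF assms] by blast
  obtain w where w: "ereal z < ereal w" "ereal w < y" using ereal_dense2[OF z(2)] by blast
  then show ?thesis using z by auto
qed

lemma ereal_less_midpoint: assumes "a < ereal u" "a < ereal v" shows "a < ereal ((u + v) / 2)"
proof -
  have "a < ereal (min u v)" using assms by (cases "u \<le> v") (auto simp: min_def)
  moreover have "min u v \<le> (u + v) / 2" by simp
  hence "ereal (min u v) \<le> ereal ((u + v) / 2)" by (simp only: ereal_less_eq(3))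
  ultimately show ?thesis by (rule less_le_trans)
qed

lemma ereal_midpoint_less: assumes "ereal u < b" "ereal v < b" shows "ereal ((u + v) / 2) < b"
proof -
  have "(u + v) / 2 \<le> max u v" by simp
  then have "ereal ((u + v) / 2) \<le> ereal (max u v)" by (simp only: ereal_less_eq(3))
  moreover have "ereal (max u v) < b" using assms by (cases "u \<le> v") (auto simp: max_def)
  ultimately show ?thesis by (rule le_less_trans)
qed

lemma strict_mono_on_lessThan_less:
  assumes "strict_mono_on {..<k} s" "i < j" "j < (k :: nat)" shows "s i < s j"
  using assms by (intro strict_mono_onD[OF assms(1)]) auto

lemma strict_mono_on_lessThan_le:
  assumes "strict_mono_on {..<k} s" "i \<le> j" "j < (k :: nat)" shows "(s i :: real) \<le> s j"
  using assms strict_mono_on_lessThan_less[OF assms(1), of i j] by (cases "i = j") auto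

lemma ereal_vector_convergent_subseq:
  fixes X :: "nat \<Rightarrow> nat \<Rightarrow> ereal"
  shows "\<exists>r. strict_mono r \<and> (\<forall>i<k. \<exists>l. (\<lambda>n. X (r n) i) \<longlonglongrightarrow> l)"
proof (induction k)
  case 0
  show ?case by (rule exI[of _ id]) (simp add: strict_mono_def)
next
  case (Suc k)
  then obtain r where r: "strict_mono r" "\<forall>i<k. \<exists>l. (\<lambda>n. X (r n) i) \<longlonglongrightarrow> l" by blast
  obtain f where f: "strict_mono f" "monoseq (\<lambda>n. X (r (f n)) k)"
    using seq_monosub[of "\<lambda>n. X (r n) k"] by blast
  have "\<exists>l. (\<lambda>n. X (r (f n)) k) \<longlonglongrightarrow> l"
    using f(2) unfolding monoseq_iff using LIMSEQ_SUP LIMSEQ_INF by blast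
  moreover have "\<exists>l. (\<lambda>n. X (r (f n)) i) \<longlonglongrightarrow> l" if ik: "i < k" for i
  proof -
    obtain l where "(\<lambda>n. X (r n) i) \<longlonglongrightarrow> l" using r(2) ik by blast
    from LIMSEQ_subseq_LIMSEQ[OF this f(1)] show ?thesis by (auto simp: comp_def)
  qed
  ultimately have "\<forall>i<Suc k. \<exists>l. (\<lambda>n. X ((r \<circ> f) n) i) \<longlonglongrightarrow> l"
    by (auto simp: less_Suc_eq)
  moreover have "strict_mono (r \<circ> f)" using r(1) f(1) by (rule strict_mono_o)
  ultimately show ?case by blast
qed

lemma eventually_abs_diff_gt_if_tendsto_infinity:
  fixes x :: "nat \<Rightarrow> real"
  assumes "(\<lambda>n. ereal (x n)) \<longlonglongrightarrow> L" and "\<bar>L\<bar> = \<infinity>"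
  shows "eventually (\<lambda>n. M < \<bar>y - x n\<bar>) sequentially"
proof -
  have "L = \<infinity> \<or> L = -\<infinity>" using assms(2) by (cases L) auto
  then show ?thesis
  proof
    assume "L = \<infinity>"
    then have "eventually (\<lambda>n. ereal (M + \<bar>y\<bar>) < ereal (x n)) sequentially"
      using order_tendstoD(1)[OF assms(1), of "ereal (M + \<bar>y\<bar>)"] by simp
    then show ?thesis by eventually_elim auto
  next
    assume "L = -\<infinity>"
    then have "eventually (\<lambda>n. ereal (x n) < ereal (- (M + \<bar>y\<bar>))) sequentially"
      using order_tendstoD(2)[OF assms(1), of "ereal (- (M + \<bar>y\<bar>))"] by simp
    then show ?thesis by eventually_elim auto
  qed
qed

lemma integrable_geometric_shift_factor:
  fixes \<Psi> :: "real \<Rightarrow> real"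
  assumes pos: "\<And>y. \<Psi> y > 0" and shift: "\<And>y. \<Psi> (y + E) = c * \<Psi> y" and int: "integrable lborel \<Psi>"
  shows "c = 1"
proof -
  have meas[measurable]: "\<Psi> \<in> borel_measurable borel" using int by auto
  have "(\<integral>y. \<Psi> y \<partial>lborel) = (\<integral>y. \<Psi> (y + E) \<partial>lborel)"
    using lborel_integral_real_affine[of 1 \<Psi> E] by (simp add: add.commute)
  also have "\<dots> = c * (\<integral>y. \<Psi> y \<partial>lborel)" by (simp add: shift)
  finally have eq: "(\<integral>y. \<Psi> y \<partial>lborel) = c * (\<integral>y. \<Psi> y \<partial>lborel)" .
  have "(\<integral>y. \<Psi> y \<partial>lborel) \<noteq> 0"
  proof
    assume "(\<integral>y. \<Psi> y \<partial>lborel) = 0"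
    then have "AE y in lborel. \<Psi> y = 0"
      using int pos by (subst (asm) integral_nonneg_eq_0_iff_AE) (auto intro: less_imp_le)
    then show False
    proof (rule AE_lborel_Ioo_contra[where \<alpha>=0 and \<beta>=1])
      fix y show "\<not> \<Psi> y = 0" using pos[of y] by simp
    qed simp
  qed
  then show ?thesis using eq by simp
qed

lemma continuous_periodic_not_integrable:
  fixes \<Psi> :: "real \<Rightarrow> real"
  assumes cont: "continuous_on UNIV \<Psi>" and pos: "\<And>y. \<Psi> y > 0" and E: "0 < E"
    and per: "\<And>y. \<Psi> (y + E) = \<Psi> y"
  shows "\<not> integrable lborel \<Psi>"
proof
  assume int: "integrable lborel \<Psi>"
  have per_n: "\<Psi> (y + real n * E) = \<Psi> y" for y n
  proof (induction n)
    case (Suc n)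
    have "y + real (Suc n) * E = (y + real n * E) + E" by (simp add: distrib_right)
    then have "\<Psi> (y + real (Suc n) * E) = \<Psi> ((y + real n * E) + E)" by (simp only:)
    then show ?case using per[of "y + real n * E"] Suc.IH by simp
  qed simp
  obtain x0 where x0: "x0 \<in> {0..E}" "\<forall>y\<in>{0..E}. \<Psi> x0 \<le> \<Psi> y"
    using continuous_attains_inf[of "{0..E}" \<Psi>] E continuous_on_subset[OF cont] by auto
  have lb: "\<Psi> x0 \<le> \<Psi> y" for y
  proof -
    define n where "n = \<lfloor>y / E\<rfloor>"
    define r where "r = y - of_int n * E"
    have "of_int n \<le> y / E" "y / E < of_int n + 1" unfolding n_def by linarith+
    then have r: "0 \<le> r" "r \<le> E" unfolding r_def using E by (auto simp: field_simps)
    have "\<Psi> y = \<Psi> r"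
    proof (cases "n \<ge> 0")
      case True
      then have "y = r + real (nat n) * E" unfolding r_def by simp
      then show ?thesis using per_n[of r "nat n"] by simp
    next
      case False
      then have "r = y + real (nat (- n)) * E" unfolding r_def by simp
      then show ?thesis using per_n[of y "nat (- n)"] by simp
    qed
    then show ?thesis using x0 r by auto
  qed
  have "\<infinity> = (\<integral>\<^sup>+ (y::real). ennreal (\<Psi> x0) \<partial>lborel)" using pos[of x0] by (simp add: ennreal_mult_top)
  also have "\<dots> \<le> (\<integral>\<^sup>+ y. ennreal (\<Psi> y) \<partial>lborel)"
    by (rule Nonnegative_Lebesgue_Integration.nn_integral_mono) (simp add: lb ennreal_leI)
  finally show False using integrableD(2)[OF int] by (simp add: top_unique)
qed

section \<open>p-centres of a density\<close>

locale power_loss =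
  fixes p :: real
  assumes p1: "1 \<le> p"
begin

definition sgn_pow :: "real \<Rightarrow> real" where
  "sgn_pow z = sgn z * \<bar>z\<bar> powr (p - 1)"

definition moment_density :: "(real \<Rightarrow> real) \<Rightarrow> bool" where
  "moment_density D \<longleftrightarrow> D \<in> borel_measurable borel \<and> (\<forall>y. 0 \<le> D y) \<and> integrable lborel D
      \<and> integrable lborel (\<lambda>y. \<bar>y\<bar> powr p * D y)"

definition dispersion :: "(real \<Rightarrow> real) \<Rightarrow> real \<Rightarrow> real" where
  "dispersion D c = (\<integral>y. \<bar>y - c\<bar> powr p * D y \<partial>lborel)"

text \<open>The derivative of dispersion D at c is -p * slope D c.\<close>
definition slope :: "(real \<Rightarrow> real) \<Rightarrow> real \<Rightarrow> real" where
  "slope D c = (\<integral>y. sgn_pow (y - c) * D y \<partial>lborel)"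

definition is_centre :: "(real \<Rightarrow> real) \<Rightarrow> real \<Rightarrow> bool" where
  "is_centre D m \<longleftrightarrow> (\<forall>c. dispersion D m \<le> dispersion D c)"

lemma sgn_pow_measurable[measurable]: "sgn_pow \<in> borel_measurable borel"
  unfolding sgn_pow_def by measurable

lemma sgn_pow_pos: "z > 0 \<Longrightarrow> sgn_pow z > 0" by (simp add: sgn_pow_def)

lemma sgn_pow_neg: "z < 0 \<Longrightarrow> sgn_pow z < 0" by (simp add: sgn_pow_def)

lemma sgn_pow_0[simp]: "sgn_pow 0 = 0" by (simp add: sgn_pow_def)

lemma sgn_pow_uminus: "sgn_pow (- z) = - sgn_pow z" by (simp add: sgn_pow_def sgn_minus)

lemma sgn_pow_bound: "\<bar>sgn_pow z\<bar> \<le> 1 + \<bar>z\<bar> powr p"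
proof -
  have "\<bar>sgn_pow z\<bar> \<le> \<bar>z\<bar> powr (p-1)" by (cases "z = 0") (auto simp: sgn_pow_def abs_mult)
  also have "\<dots> \<le> 1 + \<bar>z\<bar> powr p" using p1 by (intro powr_le_1_plus) auto
  finally show ?thesis .
qed

lemma isCont_sgn_pow: "z \<noteq> 0 \<Longrightarrow> isCont sgn_pow z"
  unfolding sgn_pow_def by (intro continuous_intros) auto

lemma powr_tangent_pos:
  fixes x w :: real assumes "x > 0" "w \<ge> 0"
  shows "x powr p + p * x powr (p - 1) * (w - x) \<le> w powr p"
proof (cases "w = 0")
  case True
  have "x * x powr (p-1) = x powr (1 + (p-1))" using assms by (intro powr_mult_base) auto
  hence "x powr (p-1) * x = x powr p" by (simp add: mult.commute)
  hence "x powr p + p * x powr (p - 1) * (w - x) = (1 - p) * x powr p" using True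
    by (simp add: algebra_simps)
  also have "\<dots> \<le> 0" using p1 by (intro mult_nonpos_nonneg) auto
  finally show ?thesis using True by simp
next
  case False
  hence w: "w > 0" using assms by simp
  have "p * x powr (p - 1) * (w - x) \<le> w powr p - x powr p"
  proof (rule f''_imp_f'[of "{0<..}" "\<lambda>x. x powr p" "\<lambda>x. p * x powr (p - 1)"
        "\<lambda>x. p * ((p - 1) * x powr (p - 1 - 1))"])
    show "convex {0::real<..}" by simp
    show "((\<lambda>x. x powr p) has_real_derivative p * x powr (p - 1)) (at x)" if "x \<in> {0<..}" for x
      using that by (auto intro!: derivative_eq_intros)
    show "((\<lambda>x. p * x powr (p - 1)) has_real_derivative p * ((p - 1) * x powr (p - 1 - 1))) (at x)"
      if "x \<in> {0<..}" for x
      using that by (auto intro!: derivative_eq_intros)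
    show "0 \<le> p * ((p - 1) * x powr (p - 1 - 1))" if "x \<in> {0<..}" for x
      using that p1 by auto
  qed (use assms w in auto)
  then show ?thesis by simp
qed

lemma abs_powr_tangent: "\<bar>x\<bar> powr p + p * sgn_pow x * (y - x) \<le> \<bar>y\<bar> powr p"
proof -
  have pos: "\<bar>x\<bar> powr p + p * sgn_pow x * (y - x) \<le> \<bar>y\<bar> powr p" if x: "x > 0" for x y :: real
  proof -
    have ps: "sgn_pow x = x powr (p - 1)" using x by (simp add: sgn_pow_def)
    have "p * sgn_pow x * (y - x) \<le> p * sgn_pow x * (\<bar>y\<bar> - x)"
      using x p1 ps by (intro mult_left_mono) auto
    hence "p * sgn_pow x * (y - x) \<le> p * x powr (p - 1) * (\<bar>y\<bar> - x)" using ps by simp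
    moreover have "x powr p + p * x powr (p - 1) * (\<bar>y\<bar> - x) \<le> \<bar>y\<bar> powr p"
      using powr_tangent_pos[OF x, of "\<bar>y\<bar>"] by simp
    ultimately show ?thesis using x by simp
  qed
  consider "x = 0" | "x > 0" | "x < 0" by linarith
  then show ?thesis
  proof cases
    case 1 then show ?thesis by simp
  next
    case 2 then show ?thesis using pos by blast
  next
    case 3
    have "\<bar>- x\<bar> powr p + p * sgn_pow (- x) * (- y - - x) \<le> \<bar>- y\<bar> powr p" using 3 by (intro pos) simp
    then show ?thesis by (auto simp: sgn_pow_uminus algebra_simps)
  qed
qed

lemma moment_density_measurable[measurable_dest]: "moment_density D \<Longrightarrow> D \<in> borel_measurable borel" by (simp add: moment_density_def)

lemma moment_density_nonneg: "moment_density D \<Longrightarrow> 0 \<le> D y" by (simp add: moment_density_def)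

lemma abs_diff_powr_bound: "\<bar>y - c\<bar> powr p \<le> 2 powr p * (\<bar>y\<bar> powr p + \<bar>c\<bar> powr p)"
proof -
  have "\<bar>y - c\<bar> powr p \<le> (\<bar>y\<bar> + \<bar>c\<bar>) powr p" using p1 by (intro powr_mono2) auto
  also have "\<dots> \<le> 2 powr p * (\<bar>y\<bar> powr p + \<bar>c\<bar> powr p)" using p1 by (intro powr_sum_le) auto
  finally show ?thesis .
qed

lemma integrable_dispersion: assumes "moment_density D" shows "integrable lborel (\<lambda>y. \<bar>y - c\<bar> powr p * D y)"
proof (rule Bochner_Integration.integrable_bound)
  show "integrable lborel (\<lambda>y. 2 powr p * (\<bar>y\<bar> powr p * D y + \<bar>c\<bar> powr p * D y))"
    using assms unfolding moment_density_def by (intro integrable_mult_right integrable_add) auto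
  show "(\<lambda>y. \<bar>y - c\<bar> powr p * D y) \<in> borel_measurable lborel" using assms by measurable
  show "AE y in lborel. norm (\<bar>y - c\<bar> powr p * D y) \<le> norm (2 powr p * (\<bar>y\<bar> powr p * D y + \<bar>c\<bar> powr p * D y))"
  proof (rule AE_I2)
    fix y
    have D: "D y \<ge> 0" using assms by (simp add: moment_density_nonneg)
    have "\<bar>y - c\<bar> powr p * D y \<le> 2 powr p * (\<bar>y\<bar> powr p + \<bar>c\<bar> powr p) * D y"
      using abs_diff_powr_bound D by (intro mult_right_mono) auto
    then show "norm (\<bar>y - c\<bar> powr p * D y) \<le> norm (2 powr p * (\<bar>y\<bar> powr p * D y + \<bar>c\<bar> powr p * D y))"
      using D by (simp add: algebra_simps abs_mult)
  qed
qed

lemma integrable_slope: assumes "moment_density D" shows "integrable lborel (\<lambda>y. sgn_pow (y - c) * D y)"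
proof (rule Bochner_Integration.integrable_bound)
  show "integrable lborel (\<lambda>y. D y + \<bar>y - c\<bar> powr p * D y)"
    using assms integrable_dispersion[OF assms, of c] unfolding moment_density_def by (intro Bochner_Integration.integrable_add) auto
  show "(\<lambda>y. sgn_pow (y - c) * D y) \<in> borel_measurable lborel" using assms by measurable
  show "AE y in lborel. norm (sgn_pow (y - c) * D y) \<le> norm (D y + \<bar>y - c\<bar> powr p * D y)"
  proof (rule AE_I2)
    fix y
    have D: "D y \<ge> 0" using assms by (simp add: moment_density_nonneg)
    have "\<bar>sgn_pow (y - c)\<bar> * D y \<le> (1 + \<bar>y - c\<bar> powr p) * D y"
      using sgn_pow_bound D by (intro mult_right_mono) auto
    then show "norm (sgn_pow (y - c) * D y) \<le> norm (D y + \<bar>y - c\<bar> powr p * D y)"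
      using D by (simp add: algebra_simps abs_mult)
  qed
qed

lemma dispersion_tangent: assumes "moment_density D"
  shows "dispersion D c - p * (c' - c) * slope D c \<le> dispersion D c'"
proof -
  have "dispersion D c - p * (c' - c) * slope D c = (\<integral>y. \<bar>y - c\<bar> powr p * D y - p * (c' - c) * (sgn_pow (y - c) * D y) \<partial>lborel)"
    unfolding dispersion_def slope_def using integrable_dispersion[OF assms] integrable_slope[OF assms]
    by (simp add: Bochner_Integration.integral_diff[OF integrable_dispersion[OF assms, of c]
          integrable_mult_right[OF integrable_slope[OF assms, of c]]] integral_mult_right_zero)
  also have "\<dots> \<le> dispersion D c'" unfolding dispersion_def
  proof (rule integral_mono)
    show "integrable lborel (\<lambda>y. \<bar>y - c\<bar> powr p * D y - p * (c' - c) * (sgn_pow (y - c) * D y))"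
      using integrable_dispersion[OF assms] integrable_slope[OF assms] by auto
    show "integrable lborel (\<lambda>y. \<bar>y - c'\<bar> powr p * D y)" using integrable_dispersion[OF assms] .
    fix y
    have D: "D y \<ge> 0" using assms by (simp add: moment_density_nonneg)
    have "\<bar>y - c\<bar> powr p + p * sgn_pow (y - c) * ((y - c') - (y - c)) \<le> \<bar>y - c'\<bar> powr p"
      by (rule abs_powr_tangent)
    hence "(\<bar>y - c\<bar> powr p - p * (c' - c) * sgn_pow (y - c)) * D y \<le> \<bar>y - c'\<bar> powr p * D y"
      using D by (intro mult_right_mono) (auto simp: algebra_simps)
    then show "\<bar>y - c\<bar> powr p * D y - p * (c' - c) * (sgn_pow (y - c) * D y) \<le> \<bar>y - c'\<bar> powr p * D y"
      by (simp add: algebra_simps)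
  qed
  finally show ?thesis .
qed

lemma is_centre_slope_sign: assumes "moment_density D" "is_centre D m" shows "(m - c) * slope D c \<ge> 0"
proof -
  have "dispersion D c - p * (m - c) * slope D c \<le> dispersion D m" by (rule dispersion_tangent[OF assms(1)])
  moreover have "dispersion D m \<le> dispersion D c" using assms(2) by (simp add: is_centre_def)
  ultimately have "p * ((m - c) * slope D c) \<ge> 0" by (simp add: algebra_simps)
  then show ?thesis using p1 by (simp add: zero_le_mult_iff)
qed

lemma slope_tendsto:
  assumes D: "moment_density D" and lim: "x \<longlonglongrightarrow> m" and bd: "\<And>n. \<bar>x n - m\<bar> \<le> 1"
  shows "(\<lambda>n. slope D (x n)) \<longlonglongrightarrow> slope D m"
  unfolding slope_def
proof (rule integral_dominated_convergence[where w="\<lambda>y. D y + 2 powr p * (\<bar>y\<bar> powr p * D y + (\<bar>m\<bar> + 1) powr p * D y)"])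
  show "(\<lambda>y. sgn_pow (y - m) * D y) \<in> borel_measurable lborel" using D by measurable
  show "(\<lambda>y. sgn_pow (y - x n) * D y) \<in> borel_measurable lborel" for n using D by measurable
  show "integrable lborel (\<lambda>y. D y + 2 powr p * (\<bar>y\<bar> powr p * D y + (\<bar>m\<bar> + 1) powr p * D y))"
    using D unfolding moment_density_def by (intro Bochner_Integration.integrable_add integrable_mult_right) auto
  show "AE y in lborel. (\<lambda>n. sgn_pow (y - x n) * D y) \<longlonglongrightarrow> sgn_pow (y - m) * D y"
    using AE_lborel_singleton[of m]
  proof eventually_elim
    case (elim y)
    have "(\<lambda>n. y - x n) \<longlonglongrightarrow> y - m" by (intro tendsto_intros lim)
    hence "(\<lambda>n. sgn_pow (y - x n)) \<longlonglongrightarrow> sgn_pow (y - m)"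
      using isCont_sgn_pow[of "y - m"] elim by (intro isCont_tendsto_compose[where g=sgn_pow]) auto
    then show ?case by (intro tendsto_intros)
  qed
  show "AE y in lborel. norm (sgn_pow (y - x n) * D y) \<le> D y + 2 powr p * (\<bar>y\<bar> powr p * D y + (\<bar>m\<bar> + 1) powr p * D y)" for n
  proof (rule AE_I2)
    fix y
    have Dy: "D y \<ge> 0" using D by (simp add: moment_density_nonneg)
    have xn: "\<bar>x n\<bar> \<le> \<bar>m\<bar> + 1" using bd[of n] by linarith
    have "\<bar>sgn_pow (y - x n)\<bar> \<le> 1 + \<bar>y - x n\<bar> powr p" by (rule sgn_pow_bound)
    also have "\<bar>y - x n\<bar> powr p \<le> 2 powr p * (\<bar>y\<bar> powr p + \<bar>x n\<bar> powr p)" by (rule abs_diff_powr_bound)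
    also have "\<bar>x n\<bar> powr p \<le> (\<bar>m\<bar> + 1) powr p" using xn p1 by (intro powr_mono2) auto
    finally have "\<bar>sgn_pow (y - x n)\<bar> \<le> 1 + 2 powr p * (\<bar>y\<bar> powr p + (\<bar>m\<bar> + 1) powr p)" by simp
    hence "\<bar>sgn_pow (y - x n)\<bar> * D y \<le> (1 + 2 powr p * (\<bar>y\<bar> powr p + (\<bar>m\<bar> + 1) powr p)) * D y"
      using Dy by (intro mult_right_mono) auto
    then show "norm (sgn_pow (y - x n) * D y) \<le> D y + 2 powr p * (\<bar>y\<bar> powr p * D y + (\<bar>m\<bar> + 1) powr p * D y)"
      using Dy by (simp add: abs_mult algebra_simps)
  qed
qed

lemma slope_centre: assumes D: "moment_density D" and m: "is_centre D m" shows "slope D m = 0"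
proof -
  define u where "u n = inverse (real (Suc n))" for n
  have u0: "u \<longlonglongrightarrow> 0" unfolding u_def by (rule LIMSEQ_inverse_real_of_nat)
  have upos: "u n > 0" "u n \<le> 1" for n unfolding u_def by (auto simp: field_simps)
  have uabs: "\<bar>u n\<bar> \<le> 1" for n using upos[of n] by simp
  have l1: "(\<lambda>n. slope D (m + u n)) \<longlonglongrightarrow> slope D m"
    using slope_tendsto[OF D, of "\<lambda>n. m + u n" m] u0 uabs tendsto_add[OF tendsto_const u0, of m] by auto
  have l2: "(\<lambda>n. slope D (m - u n)) \<longlonglongrightarrow> slope D m"
    using slope_tendsto[OF D, of "\<lambda>n. m - u n" m] u0 uabs tendsto_diff[OF tendsto_const u0, of m] by auto
  have "slope D (m + u n) \<le> 0" for n
  proof -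
    have "(m - (m + u n)) * slope D (m + u n) \<ge> 0" by (rule is_centre_slope_sign[OF D m])
    then show ?thesis using upos[of n] by (simp add: mult_le_0_iff zero_le_mult_iff)
  qed
  hence a: "slope D m \<le> 0" using l1 by (intro tendsto_upperbound) auto
  have "slope D (m - u n) \<ge> 0" for n
  proof -
    have "(m - (m - u n)) * slope D (m - u n) \<ge> 0" by (rule is_centre_slope_sign[OF D m])
    then show ?thesis using upos[of n] by (simp add: zero_le_mult_iff)
  qed
  hence b: "slope D m \<ge> 0" using l2 by (intro tendsto_lowerbound) auto
  from a b show ?thesis by simp
qed

lemma slope_compare:
  assumes D: "moment_density D" and L: "moment_density L" and k: "\<kappa> \<ge> 0"
    and up: "\<And>y. y > m \<Longrightarrow> L y \<le> \<kappa> * D y" and lo: "\<And>y. y < m \<Longrightarrow> \<kappa> * D y \<le> L y"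
  shows "slope L m \<le> \<kappa> * slope D m"
    and "slope L m = \<kappa> * slope D m \<Longrightarrow> AE y in lborel. L y = \<kappa> * D y"
proof -
  have "(\<integral>y. sgn_pow (y - m) * (\<kappa> * D y - L y) \<partial>lborel) =
     (\<integral>y. \<kappa> * (sgn_pow (y - m) * D y) - sgn_pow (y - m) * L y \<partial>lborel)"
    by (simp add: algebra_simps)
  also have "\<dots> = (\<integral>y. \<kappa> * (sgn_pow (y - m) * D y) \<partial>lborel) - (\<integral>y. sgn_pow (y - m) * L y \<partial>lborel)"
    by (rule Bochner_Integration.integral_diff[OF integrable_mult_right[OF integrable_slope[OF D]] integrable_slope[OF L]])
  also have "\<dots> = \<kappa> * slope D m - slope L m" unfolding slope_def by (simp add: integral_mult_right_zero)
  finally have eq: "\<kappa> * slope D m - slope L m = (\<integral>y. sgn_pow (y - m) * (\<kappa> * D y - L y) \<partial>lborel)" by simp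
  have int: "integrable lborel (\<lambda>y. sgn_pow (y - m) * (\<kappa> * D y - L y))"
    using integrable_slope[OF D, of m] integrable_slope[OF L, of m] by (simp add: algebra_simps)
  have nn: "sgn_pow (y - m) * (\<kappa> * D y - L y) \<ge> 0" for y
  proof -
    consider "y > m" | "y = m" | "y < m" by linarith
    then show ?thesis
    proof cases
      case 1 then show ?thesis using sgn_pow_pos[of "y - m"] up[of y] by simp
    next
      case 2 then show ?thesis by simp
    next
      case 3 then show ?thesis using sgn_pow_neg[of "y - m"] lo[of y] by (simp add: mult_nonpos_nonpos)
    qed
  qed
  have "0 \<le> (\<integral>y. sgn_pow (y - m) * (\<kappa> * D y - L y) \<partial>lborel)" by (rule integral_nonneg_AE[OF AE_I2[OF nn]])
  then show "slope L m \<le> \<kappa> * slope D m" using eq by simp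
  assume "slope L m = \<kappa> * slope D m"
  hence "(\<integral>y. sgn_pow (y - m) * (\<kappa> * D y - L y) \<partial>lborel) = 0" using eq by simp
  hence "AE y in lborel. sgn_pow (y - m) * (\<kappa> * D y - L y) = 0"
    using int nn by (subst (asm) integral_nonneg_eq_0_iff_AE) auto
  then show "AE y in lborel. L y = \<kappa> * D y"
    using AE_lborel_singleton[of m]
  proof eventually_elim
    case (elim y)
    then have "sgn_pow (y - m) \<noteq> 0" using sgn_pow_pos[of "y - m"] sgn_pow_neg[of "y - m"] by (cases "y > m") auto
    then show ?case using elim by simp
  qed
qed

lemma AE_eq_scaled_if_centres:
  assumes D: "moment_density D" and L: "moment_density L" and k: "\<kappa> \<ge> 0" and m: "is_centre D m" and m': "is_centre L m'" and mm: "m \<le> m'"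
    and up: "\<And>y. y > m \<Longrightarrow> L y \<le> \<kappa> * D y" and lo: "\<And>y. y < m \<Longrightarrow> \<kappa> * D y \<le> L y"
  shows "AE y in lborel. L y = \<kappa> * D y"
proof (rule slope_compare(2)[where m=m, OF D L k up lo])
  have h0: "slope D m = 0" by (rule slope_centre[OF D m])
  have "slope L m \<le> 0" using slope_compare(1)[where m=m, OF D L k up lo] h0 by simp
  moreover have "slope L m \<ge> 0"
  proof (cases "m = m'")
    case True then show ?thesis using slope_centre[OF L m'] by simp
  next
    case False
    hence "m < m'" using mm by simp
    moreover have "(m' - m) * slope L m \<ge> 0" by (rule is_centre_slope_sign[OF L m'])
    ultimately show ?thesis by (simp add: zero_le_mult_iff)
  qed
  ultimately show "slope L m = \<kappa> * slope D m" using h0 by simp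
qed

lemma moment_density_shift: assumes D: "moment_density D" shows "moment_density (\<lambda>y. D (y + e))"
proof -
  have "integrable lborel (\<lambda>x. D (e + 1 * x))"
    using D unfolding moment_density_def by (intro lborel_integrable_real_affine) auto
  moreover have "integrable lborel (\<lambda>x. \<bar>(e + 1 * x) - e\<bar> powr p * D (e + 1 * x))"
    using integrable_dispersion[OF D, of e] by (intro lborel_integrable_real_affine[where f="\<lambda>z. \<bar>z - e\<bar> powr p * D z"]) auto
  ultimately show ?thesis using D unfolding moment_density_def by (auto simp: add.commute)
qed

lemma dispersion_shift: "dispersion (\<lambda>y. D (y + e)) c = dispersion D (c + e)"
  unfolding dispersion_def
  using lborel_integral_real_affine[of 1 "\<lambda>z. \<bar>z - (c + e)\<bar> powr p * D z" e]
  by (simp add: add.commute add_diff_eq diff_diff_eq)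

lemma is_centre_shift: "is_centre D m \<Longrightarrow> is_centre (\<lambda>y. D (y + e)) (m - e)"
  unfolding is_centre_def dispersion_shift by (metis diff_add_cancel)

lemma is_centre_left_of_mass:
  assumes D: "moment_density D" and c: "is_centre D c" and z: "\<And>y. y \<le> c \<Longrightarrow> D y = 0"
    and ab: "c \<le> \<alpha>" "\<alpha> < \<beta>" and pos: "\<And>y. \<alpha> < y \<Longrightarrow> y < \<beta> \<Longrightarrow> D y > 0"
  shows False
proof -
  have nn: "sgn_pow (y - c) * D y \<ge> 0" for y
    using z[of y] sgn_pow_pos[of "y - c"] moment_density_nonneg[OF D, of y] by (cases "y \<le> c") auto
  have "(\<integral>y. sgn_pow (y - c) * D y \<partial>lborel) = 0" using slope_centre[OF D c] unfolding slope_def .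
  hence "AE y in lborel. sgn_pow (y - c) * D y = 0"
    using integrable_slope[OF D, of c] nn by (subst (asm) integral_nonneg_eq_0_iff_AE) auto
  moreover have "\<not> sgn_pow (y - c) * D y = 0" if "\<alpha> < y" "y < \<beta>" for y
    using sgn_pow_pos[of "y - c"] pos[OF that] that ab by auto
  ultimately show False using AE_lborel_Ioo_contra[OF _ ab(2)] by blast
qed

lemma is_centre_right_of_mass:
  assumes D: "moment_density D" and c: "is_centre D c" and z: "\<And>y. c \<le> y \<Longrightarrow> D y = 0"
    and ab: "\<beta> \<le> c" "\<alpha> < \<beta>" and pos: "\<And>y. \<alpha> < y \<Longrightarrow> y < \<beta> \<Longrightarrow> D y > 0"
  shows False
proof -
  have nn: "- (sgn_pow (y - c) * D y) \<ge> 0" for y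
    using z[of y] sgn_pow_neg[of "y - c"] moment_density_nonneg[OF D, of y] by (cases "c \<le> y") (auto simp: mult_nonpos_nonneg)
  have "(\<integral>y. - (sgn_pow (y - c) * D y) \<partial>lborel) = 0" using slope_centre[OF D c] unfolding slope_def by simp
  hence "AE y in lborel. - (sgn_pow (y - c) * D y) = 0"
    using integrable_slope[OF D, of c] nn by (subst (asm) integral_nonneg_eq_0_iff_AE) auto
  moreover have "\<not> - (sgn_pow (y - c) * D y) = 0" if "\<alpha> < y" "y < \<beta>" for y
    using sgn_pow_neg[of "y - c"] pos[OF that] that ab by auto
  ultimately show False using AE_lborel_Ioo_contra[OF _ ab(2)] by blast
qed

end

section \<open>Voronoi cells of sorted points\<close>

definition voronoi_bound :: "(nat \<Rightarrow> real) \<Rightarrow> nat \<Rightarrow> nat \<Rightarrow> ereal" where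
  "voronoi_bound s k i = (if i = 0 then -\<infinity> else if k \<le> i then \<infinity> else ereal ((s (i - 1) + s i) / 2))"

definition voronoi_cell :: "(nat \<Rightarrow> real) \<Rightarrow> nat \<Rightarrow> nat \<Rightarrow> real set" where
  "voronoi_cell s k i = {y. voronoi_bound s k i \<le> ereal y \<and> ereal y < voronoi_bound s k (Suc i)}"

lemma voronoi_bound_mid: "0 < i \<Longrightarrow> i < k \<Longrightarrow> voronoi_bound s k i = ereal ((s (i - 1) + s i) / 2)"
  by (simp add: voronoi_bound_def)

lemma voronoi_bound_0[simp]: "voronoi_bound s k 0 = -\<infinity>" by (simp add: voronoi_bound_def)

lemma voronoi_bound_top[simp]: "k \<le> i \<Longrightarrow> 0 < i \<Longrightarrow> voronoi_bound s k i = \<infinity>" by (simp add: voronoi_bound_def)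

lemma voronoi_cell_borel[measurable]: "voronoi_cell s k i \<in> sets borel"
  unfolding voronoi_cell_def by measurable

lemma voronoi_bound_less: assumes "strict_mono_on {..<k} s" "i < j" "j \<le> k" shows "voronoi_bound s k i < voronoi_bound s k j"
proof -
  consider "i = 0" | "j = k" | "0 < i" "j < k" using assms by linarith
  then show ?thesis
  proof cases
    case 1 then show ?thesis using assms by (auto simp: voronoi_bound_def)
  next
    case 2 then show ?thesis using assms by (auto simp: voronoi_bound_def)
  next
    case 3
    have "s (i - 1) < s (j - 1)" "s i < s j" using assms 3 by (auto intro: strict_mono_on_lessThan_less)
    then show ?thesis using 3 assms by (auto simp: voronoi_bound_def)
  qed
qed

lemma voronoi_bound_mono: assumes "strict_mono_on {..<k} s" "i \<le> j" "j \<le> k" shows "voronoi_bound s k i \<le> voronoi_bound s k j"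
  using voronoi_bound_less[OF assms(1) _ assms(3), of i] assms(2) by (cases "i = j") auto

lemma voronoi_bound_less_point: assumes "strict_mono_on {..<k} s" "i < k"
  shows "voronoi_bound s k i < ereal (s i)" "ereal (s i) < voronoi_bound s k (Suc i)"
proof -
  show "voronoi_bound s k i < ereal (s i)"
  proof (cases "i = 0")
    case False
    have "s (i - 1) < s i" using assms False by (auto intro: strict_mono_on_lessThan_less)
    then show ?thesis using False assms by (auto simp: voronoi_bound_def)
  qed (simp add: voronoi_bound_def)
  show "ereal (s i) < voronoi_bound s k (Suc i)"
  proof (cases "Suc i < k")
    case True
    have "s i < s (Suc i)" using assms True by (auto intro: strict_mono_on_lessThan_less)
    then show ?thesis using True by (auto simp: voronoi_bound_def)
  qed (simp add: voronoi_bound_def)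
qed

lemma voronoi_cell_cover: assumes "strict_mono_on {..<k} s" "0 < k" shows "\<exists>i<k. y \<in> voronoi_cell s k i"
proof -
  define I where "I = {i. i < k \<and> voronoi_bound s k i \<le> ereal y}"
  have fin: "finite I" "0 \<in> I" using assms by (auto simp: I_def voronoi_bound_def)
  define i where "i = Max I"
  have iI: "i \<in> I" using fin unfolding i_def by (intro Max_in) auto
  have "ereal y < voronoi_bound s k (Suc i)"
  proof (cases "Suc i < k")
    case True
    have "Suc i \<notin> I"
    proof
      assume "Suc i \<in> I"
      hence "Suc i \<le> i" using Max_ge[OF fin(1)] unfolding i_def by blast
      then show False by simp
    qed
    then show ?thesis using True by (auto simp: I_def)
  next
    case False
    hence "Suc i = k" using iI by (auto simp: I_def)
    then show ?thesis by (simp add: voronoi_bound_def)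
  qed
  then show ?thesis using iI unfolding I_def voronoi_cell_def by auto
qed

lemma voronoi_cell_unique: assumes "strict_mono_on {..<k} s" "y \<in> voronoi_cell s k i" "y \<in> voronoi_cell s k j" "i < k" "j < k" shows "i = j"
proof (rule ccontr)
  assume "i \<noteq> j"
  then consider "i < j" | "j < i" by linarith
  then show False
  proof cases
    case 1
    have "voronoi_bound s k (Suc i) \<le> voronoi_bound s k j" using 1 assms by (intro voronoi_bound_mono) auto
    then show False using assms(2,3) unfolding voronoi_cell_def by auto
  next
    case 2
    have "voronoi_bound s k (Suc j) \<le> voronoi_bound s k i" using 2 assms by (intro voronoi_bound_mono) auto
    then show False using assms(2,3) unfolding voronoi_cell_def by auto
  qed
qed

lemma voronoi_cell_nearest: assumes "strict_mono_on {..<k} s" "y \<in> voronoi_cell s k i" "i < k" "j < k"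
  shows "\<bar>y - s i\<bar> \<le> \<bar>y - s j\<bar>"
proof -
  consider "j = i" | "i < j" | "j < i" by linarith
  then show ?thesis
  proof cases
    case 2
    have "ereal y < voronoi_bound s k (Suc i)" using assms unfolding voronoi_cell_def by auto
    moreover have "Suc i < k" using 2 assms by auto
    ultimately have "y < (s i + s (Suc i)) / 2" by (simp add: voronoi_bound_def)
    moreover have "s (Suc i) \<le> s j"
    proof (cases "Suc i = j")
      case False
      hence "Suc i < j" using 2 by simp
      then show ?thesis using assms(1,4) by (meson less_imp_le strict_mono_on_lessThan_less)
    qed simp
    moreover have "s i < s j" using assms 2 by (auto intro: strict_mono_on_lessThan_less)
    ultimately show ?thesis by (cases "y \<le> s i"; cases "y \<le> s j") (auto simp: abs_real_def field_simps)
  next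
    case 3
    have "voronoi_bound s k i \<le> ereal y" using assms unfolding voronoi_cell_def by auto
    moreover have "0 < i" using 3 by auto
    ultimately have "(s (i - 1) + s i) / 2 \<le> y" using assms by (simp add: voronoi_bound_def)
    moreover have "s j \<le> s (i - 1)"
    proof (cases "j = i - 1")
      case False
      hence "j < i - 1" using 3 by simp
      moreover have "i - 1 < k" using assms(3) by simp
      ultimately show ?thesis using assms(1) by (meson less_imp_le strict_mono_on_lessThan_less)
    qed simp
    moreover have "s j < s i" using assms 3 by (auto intro: strict_mono_on_lessThan_less)
    ultimately show ?thesis by (cases "y \<le> s i"; cases "y \<le> s j") (auto simp: abs_real_def field_simps)
  qed simp
qed

lemma infdist_voronoi_cell: assumes "strict_mono_on {..<k} s" "y \<in> voronoi_cell s k i" "i < k"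
  shows "infdist y (s ` {..<k}) = \<bar>y - s i\<bar>"
proof -
  have ne: "s ` {..<k} \<noteq> {}" using assms by auto
  have cl: "closed (s ` {..<k})" by (intro finite_imp_closed) auto
  obtain x where x: "x \<in> s ` {..<k}" "infdist y (s ` {..<k}) = dist y x"
    using infdist_attains_inf[OF cl ne, of y] by blast
  obtain j where j: "j < k" "x = s j" using x by auto
  have "infdist y (s ` {..<k}) \<le> \<bar>y - s i\<bar>" using infdist_le[of "s i" "s ` {..<k}" y] assms
    by (auto simp: dist_real_def)
  moreover have "\<bar>y - s i\<bar> \<le> infdist y (s ` {..<k})" using x j voronoi_cell_nearest[OF assms(1,2,3) j(1)]
    by (simp add: dist_real_def)
  ultimately show ?thesis by simp
qed

lemma sum_voronoi_cell_indicator: assumes "strict_mono_on {..<k} s" "y \<in> voronoi_cell s k i0" "i0 < k"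
  shows "(\<Sum>i<k. F i * indicator (voronoi_cell s k i) y) = (F i0 :: real)"
proof -
  have "(\<Sum>i<k. F i * indicator (voronoi_cell s k i) y) = (\<Sum>i<k. if i = i0 then F i else 0)"
    using voronoi_cell_unique[OF assms(1)] assms by (intro sum.cong) (auto simp: indicator_def)
  also have "\<dots> = F i0" using assms(3) by (simp add: sum.delta)
  finally show ?thesis .
qed

lemma voronoi_bound_shift: assumes "\<forall>i<k. s' i - s i = E" shows "voronoi_bound s' k i = voronoi_bound s k i + ereal E"
proof -
  consider "i = 0" | "0 < i" "k \<le> i" | "0 < i" "i < k" by linarith
  then show ?thesis
  proof cases
    case 3
    have "i - 1 < k" using 3 by simp
    hence "s' (i - 1) - s (i - 1) = E" "s' i - s i = E" using assms 3 by blast+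
    hence "s' (i - 1) = s (i - 1) + E" "s' i = s i + E" by simp_all
    then show ?thesis using 3 by (simp add: voronoi_bound_mid field_simps)
  qed simp_all
qed

lemma voronoi_cell_shift: assumes "\<forall>i<k. s' i - s i = E" shows "y + E \<in> voronoi_cell s' k j \<longleftrightarrow> y \<in> voronoi_cell s k j"
proof -
  have a: "voronoi_bound s k j + ereal E \<le> ereal (y + E) \<longleftrightarrow> voronoi_bound s k j \<le> ereal y" by (cases "voronoi_bound s k j") auto
  have b: "ereal (y + E) < voronoi_bound s k (Suc j) + ereal E \<longleftrightarrow> ereal y < voronoi_bound s k (Suc j)" by (cases "voronoi_bound s k (Suc j)") auto
  show ?thesis unfolding voronoi_cell_def using voronoi_bound_shift[OF assms] a b by simp
qed

definition sorted_enum :: "real set \<Rightarrow> nat \<Rightarrow> real" where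
  "sorted_enum V i = sorted_list_of_set V ! i"

lemma sorted_enum_enumerates: assumes "finite V"
  shows "strict_mono_on {..<card V} (sorted_enum V)" "sorted_enum V ` {..<card V} = V"
proof -
  have l: "length (sorted_list_of_set V) = card V" using assms by simp
  have sw: "sorted_wrt (<) (sorted_list_of_set V)" using assms by (simp add: strict_sorted_list_of_set)
  show "strict_mono_on {..<card V} (sorted_enum V)" unfolding strict_mono_on_def sorted_enum_def
    using sorted_wrt_nth_less[OF sw] l by auto
  have "x \<in> sorted_enum V ` {..<card V} \<longleftrightarrow> x \<in> set (sorted_list_of_set V)" for x
    unfolding sorted_enum_def in_set_conv_nth l by auto
  then show "sorted_enum V ` {..<card V} = V" using assms by auto
qed

text \<open>Read e i as the displacement of the i-th point and d i as that of the boundary between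
  cells i and i + 1: a cell none of whose boundaries moves further than its point moves rigidly.\<close>
lemma boundary_shift_rigidity:
  fixes e :: "nat \<Rightarrow> real"
  defines "d i \<equiv> (e i + e (Suc i)) / 2"
  assumes k: "2 \<le> k" and d0: "0 \<le> d 0"
    and right: "\<And>j. Suc j < k \<Longrightarrow> 0 \<le> e j \<Longrightarrow> (0 < j \<Longrightarrow> d (j - 1) \<le> e j) \<Longrightarrow> d j \<le> e j \<Longrightarrow> d j = e j"
    and left: "\<And>j. j < k \<Longrightarrow> 0 < j \<Longrightarrow> 0 \<le> e j \<Longrightarrow> d (j - 1) \<le> e j \<Longrightarrow> (Suc j < k \<Longrightarrow> d j \<le> e j)
      \<Longrightarrow> d (j - 1) = e j"
  shows "\<forall>i<k. e i = e 0"
proof -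
  have inv: "e j \<le> d j \<and> 0 \<le> d j \<and> (e j = d j \<longrightarrow> (\<forall>i\<le>j. e i = e 0))" if "Suc j < k" for j
    using that
  proof (induction j)
    case 0
    have "e 0 \<le> d 0"
    proof (rule ccontr)
      assume "\<not> e 0 \<le> d 0"
      moreover have "d 0 = e 0" by (rule right) (use 0 d0 \<open>\<not> e 0 \<le> d 0\<close> in auto)
      ultimately show False by simp
    qed
    then show ?case using d0 by simp
  next
    case (Suc j)
    have IH: "e j \<le> d j" "0 \<le> d j" "e j = d j \<longrightarrow> (\<forall>i\<le>j. e i = e 0)"
      using Suc.IH[OF Suc_lessD[OF Suc.prems]] by blast+
    have ge: "d j \<le> e (Suc j)" using IH(1) by (simp add: d_def)
    have e0: "0 \<le> e (Suc j)" using ge IH(2) by simp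
    have le: "e (Suc j) \<le> d (Suc j)"
    proof (rule ccontr)
      assume lt: "\<not> ?thesis"
      moreover have "d (Suc j) = e (Suc j)" by (rule right) (use Suc.prems ge e0 lt in auto)
      ultimately show False by simp
    qed
    moreover have "\<forall>i\<le>Suc j. e i = e 0" if eq: "e (Suc j) = d (Suc j)"
    proof -
      have "d (Suc j - 1) = e (Suc j)" by (rule left) (use Suc.prems eq ge e0 in auto)
      then have "d j = e (Suc j)" by simp
      then have "e j = d j" "e (Suc j) = e j" by (simp_all add: d_def)
      then have all: "\<forall>i\<le>j. e i = e 0" using IH(3) by blast
      have "e (Suc j) = e 0" using all[rule_format, OF order_refl] \<open>e (Suc j) = e j\<close> by simp
      show ?thesis
      proof (intro allI impI)
        fix i assume "i \<le> Suc j"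
        then have "i \<le> j \<or> i = Suc j" by linarith
        then show "e i = e 0" using all \<open>e (Suc j) = e 0\<close> by blast
      qed
    qed
    moreover have "0 \<le> d (Suc j)" using e0 le by linarith
    ultimately show ?case by blast
  qed
  define j where "j = k - 2"
  have jk: "Suc j < k" "Suc (Suc j) = k" using k by (auto simp: j_def)
  have I: "e j \<le> d j" "0 \<le> d j" "e j = d j \<longrightarrow> (\<forall>i\<le>j. e i = e 0)" using inv[OF jk(1)] by blast+
  have ge: "d j \<le> e (Suc j)" using I(1) by (simp add: d_def)
  have "d (Suc j - 1) = e (Suc j)" by (rule left) (use jk ge I(2) in auto)
  then have "d j = e (Suc j)" by simp
  then have "e j = d j" "e (Suc j) = e j" by (simp_all add: d_def)
  then have all: "\<forall>i\<le>j. e i = e 0" using I(3) by blast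
  have "e (Suc j) = e 0" using all[rule_format, OF order_refl] \<open>e (Suc j) = e j\<close> by simp
  show ?thesis
  proof (intro allI impI)
    fix i assume "i < k"
    then have "i \<le> j \<or> i = Suc j" using jk(2) by linarith
    then show "e i = e 0" using all \<open>e (Suc j) = e 0\<close> by blast
  qed
qed

section \<open>Optimal codebooks\<close>

locale quantization = power_loss +
  fixes \<Psi> :: "real \<Rightarrow> real" and a b :: ereal
  assumes Psi_meas[measurable]: "\<Psi> \<in> borel_measurable borel"
    and Psi_pos: "\<And>y. a < ereal y \<Longrightarrow> ereal y < b \<Longrightarrow> \<Psi> y > 0"
    and Psi_zero: "\<And>y. \<not> (a < ereal y \<and> ereal y < b) \<Longrightarrow> \<Psi> y = 0"
    and Psi_int: "integrable lborel \<Psi>"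
    and Psi_mom: "integrable lborel (\<lambda>y. \<bar>y\<bar> powr p * \<Psi> y)"
    and ab: "a < b"
begin

lemma Psi_pos_iff: "\<Psi> y > 0 \<longleftrightarrow> a < ereal y \<and> ereal y < b"
  using Psi_pos Psi_zero by force

lemma Psi_nonneg: "\<Psi> y \<ge> 0"
  using Psi_pos_iff[of y] Psi_zero[of y] by force

lemma moment_density_Psi: "moment_density \<Psi>"
  unfolding moment_density_def using Psi_int Psi_mom Psi_nonneg by auto

definition density_on :: "real set \<Rightarrow> real \<Rightarrow> real" where
  "density_on S y = \<Psi> y * indicator S y"

lemma density_on_nonneg: "density_on S y \<ge> 0" by (simp add: density_on_def Psi_nonneg)

lemma moment_density_on: assumes S[measurable]: "S \<in> sets borel" shows "moment_density (density_on S)"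
proof -
  have "integrable lborel (density_on S)"
  proof (rule Bochner_Integration.integrable_bound[OF Psi_int])
    show "density_on S \<in> borel_measurable lborel" unfolding density_on_def by measurable
    show "AE x in lborel. norm (density_on S x) \<le> norm (\<Psi> x)"
      by (rule AE_I2) (auto simp: density_on_def Psi_nonneg indicator_def)
  qed
  moreover have "integrable lborel (\<lambda>y. \<bar>y\<bar> powr p * density_on S y)"
  proof (rule Bochner_Integration.integrable_bound[OF Psi_mom])
    show "(\<lambda>y. \<bar>y\<bar> powr p * density_on S y) \<in> borel_measurable lborel" unfolding density_on_def by measurable
    show "AE x in lborel. norm (\<bar>x\<bar> powr p * density_on S x) \<le> norm (\<bar>x\<bar> powr p * \<Psi> x)"
      by (rule AE_I2) (auto simp: density_on_def Psi_nonneg indicator_def abs_mult)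
  qed
  ultimately show ?thesis unfolding moment_density_def using density_on_nonneg by (auto simp: density_on_def)
qed

definition quant_error :: "real set \<Rightarrow> real" where
  "quant_error V = (\<integral>y. infdist y V powr p * \<Psi> y \<partial>lborel)"

definition codebook :: "nat \<Rightarrow> real set \<Rightarrow> bool" where
  "codebook k V \<longleftrightarrow> finite V \<and> V \<noteq> {} \<and> card V \<le> k"

definition optimal :: "nat \<Rightarrow> real set \<Rightarrow> bool" where
  "optimal k V \<longleftrightarrow> codebook k V \<and> (\<forall>W. codebook k W \<longrightarrow> quant_error V \<le> quant_error W)"

lemma borel_measurable_infdist[measurable]: "(\<lambda>y::real. infdist y V) \<in> borel_measurable borel"
  by (intro borel_measurable_continuous_onI continuous_at_imp_continuous_on ballI continuous_infdist continuous_ident)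

lemma integrable_quant_error: assumes "v \<in> V" shows "integrable lborel (\<lambda>y. infdist y V powr p * \<Psi> y)"
proof (rule Bochner_Integration.integrable_bound[OF integrable_dispersion[OF moment_density_Psi, of v]])
  show "(\<lambda>y. infdist y V powr p * \<Psi> y) \<in> borel_measurable lborel" by measurable
  show "AE y in lborel. norm (infdist y V powr p * \<Psi> y) \<le> norm (\<bar>y - v\<bar> powr p * \<Psi> y)"
  proof (rule AE_I2)
    fix y
    have "infdist y V \<le> \<bar>y - v\<bar>" using infdist_le[OF assms, of y] by (simp add: dist_real_def)
    hence "infdist y V powr p \<le> \<bar>y - v\<bar> powr p" using p1 by (intro powr_mono2) (auto simp: infdist_nonneg)
    hence "infdist y V powr p * \<Psi> y \<le> \<bar>y - v\<bar> powr p * \<Psi> y" using Psi_nonneg by (intro mult_right_mono) auto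
    then show "norm (infdist y V powr p * \<Psi> y) \<le> norm (\<bar>y - v\<bar> powr p * \<Psi> y)"
      using Psi_nonneg[of y] by simp
  qed
qed

lemma quant_error_nonneg: "0 \<le> quant_error V" unfolding quant_error_def by (intro integral_nonneg_AE AE_I2) (simp add: Psi_nonneg)

lemma integral_Psi_pos: "0 < (\<integral>y. \<Psi> y \<partial>lborel)"
proof -
  obtain \<alpha> \<beta> where ab': "a < ereal \<alpha>" "\<alpha> < \<beta>" "ereal \<beta> < b" using ereal_two_between[OF ab] by blast
  have "(\<integral>y. \<Psi> y \<partial>lborel) \<noteq> 0"
  proof
    assume "(\<integral>y. \<Psi> y \<partial>lborel) = 0"
    hence "AE y in lborel. \<Psi> y = 0" using Psi_int Psi_nonneg by (subst (asm) integral_nonneg_eq_0_iff_AE) auto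
    then show False
    proof (rule AE_lborel_Ioo_contra[OF _ ab'(2)])
      fix y assume y: "\<alpha> < y" "y < \<beta>"
      have y1: "ereal \<alpha> < ereal y" and y2: "ereal y < ereal \<beta>" using y by auto
      have "a < ereal y" "ereal y < b" using less_trans[OF ab'(1) y1] less_trans[OF y2 ab'(3)] by auto
      then show "\<not> \<Psi> y = 0" using Psi_pos[of y] by simp
    qed
  qed
  moreover have "0 \<le> (\<integral>y. \<Psi> y \<partial>lborel)" by (intro integral_nonneg_AE AE_I2) (simp add: Psi_nonneg)
  ultimately show ?thesis by simp
qed

lemma integrable_dispersion_cells:
  "integrable lborel (\<lambda>y. \<Sum>i<k. \<bar>y - w i\<bar> powr p * density_on (voronoi_cell s k i) y)"
  by (intro Bochner_Integration.integrable_sum integrable_dispersion moment_density_on voronoi_cell_borel)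

lemma quant_error_le_sum_dispersion: assumes "strict_mono_on {..<k} s" "0 < k"
  shows "quant_error (w ` {..<k}) \<le> (\<Sum>i<k. dispersion (density_on (voronoi_cell s k i)) (w i))"
proof -
  have "quant_error (w ` {..<k}) \<le> (\<integral>y. (\<Sum>i<k. \<bar>y - w i\<bar> powr p * density_on (voronoi_cell s k i) y) \<partial>lborel)"
    unfolding quant_error_def
  proof (rule integral_mono)
    show "integrable lborel (\<lambda>y. infdist y (w ` {..<k}) powr p * \<Psi> y)"
      using assms by (intro integrable_quant_error[of "w 0"]) auto
    show "integrable lborel (\<lambda>y. \<Sum>i<k. \<bar>y - w i\<bar> powr p * density_on (voronoi_cell s k i) y)" by (rule integrable_dispersion_cells)
    fix y
    obtain i0 where i0: "i0 < k" "y \<in> voronoi_cell s k i0" using voronoi_cell_cover[OF assms] by blast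
    have "infdist y (w ` {..<k}) \<le> \<bar>y - w i0\<bar>" using infdist_le[of "w i0" "w ` {..<k}" y] i0
      by (simp add: dist_real_def)
    hence "infdist y (w ` {..<k}) powr p \<le> \<bar>y - w i0\<bar> powr p" using p1 by (intro powr_mono2) (auto simp: infdist_nonneg)
    hence "infdist y (w ` {..<k}) powr p * \<Psi> y \<le> \<bar>y - w i0\<bar> powr p * \<Psi> y" using Psi_nonneg by (intro mult_right_mono) auto
    also have "\<dots> = (\<Sum>i<k. (\<bar>y - w i\<bar> powr p * \<Psi> y) * indicator (voronoi_cell s k i) y)"
      by (rule sum_voronoi_cell_indicator[OF assms(1) i0(2,1), symmetric])
    finally show "infdist y (w ` {..<k}) powr p * \<Psi> y \<le> (\<Sum>i<k. \<bar>y - w i\<bar> powr p * density_on (voronoi_cell s k i) y)"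
      by (simp add: density_on_def mult.assoc)
  qed
  also have "\<dots> = (\<Sum>i<k. dispersion (density_on (voronoi_cell s k i)) (w i))" unfolding dispersion_def
    by (intro Bochner_Integration.integral_sum integrable_dispersion moment_density_on voronoi_cell_borel)
  finally show ?thesis .
qed

lemma quant_error_eq_sum_dispersion: assumes "strict_mono_on {..<k} s" "0 < k"
  shows "quant_error (s ` {..<k}) = (\<Sum>i<k. dispersion (density_on (voronoi_cell s k i)) (s i))"
proof -
  have "quant_error (s ` {..<k}) = (\<integral>y. (\<Sum>i<k. \<bar>y - s i\<bar> powr p * density_on (voronoi_cell s k i) y) \<partial>lborel)"
    unfolding quant_error_def
  proof (rule Bochner_Integration.integral_cong[OF refl])
    fix y
    obtain i0 where i0: "i0 < k" "y \<in> voronoi_cell s k i0" using voronoi_cell_cover[OF assms] by blast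
    have "infdist y (s ` {..<k}) powr p * \<Psi> y = \<bar>y - s i0\<bar> powr p * \<Psi> y"
      using infdist_voronoi_cell[OF assms(1) i0(2,1)] by simp
    also have "\<dots> = (\<Sum>i<k. (\<bar>y - s i\<bar> powr p * \<Psi> y) * indicator (voronoi_cell s k i) y)"
      by (rule sum_voronoi_cell_indicator[OF assms(1) i0(2,1), symmetric])
    finally show "infdist y (s ` {..<k}) powr p * \<Psi> y = (\<Sum>i<k. \<bar>y - s i\<bar> powr p * density_on (voronoi_cell s k i) y)"
      by (simp add: density_on_def mult.assoc)
  qed
  also have "\<dots> = (\<Sum>i<k. dispersion (density_on (voronoi_cell s k i)) (s i))" unfolding dispersion_def
    by (intro Bochner_Integration.integral_sum integrable_dispersion moment_density_on voronoi_cell_borel)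
  finally show ?thesis .
qed

lemma optimal_cell_centre:
  assumes opt: "optimal k V" and j: "j < card V"
  shows "is_centre (density_on (voronoi_cell (sorted_enum V) (card V) j)) (sorted_enum V j)"
  unfolding is_centre_def
proof
  fix c
  define n where "n = card V"
  define s where "s = sorted_enum V"
  define \<Phi> where "\<Phi> i x = dispersion (density_on (voronoi_cell s n i)) x" for i x
  have fin: "finite V" "V \<noteq> {}" and kn: "n \<le> k" using opt unfolding optimal_def codebook_def n_def by auto
  have n0: "0 < n" using fin unfolding n_def by (simp add: card_gt_0_iff)
  have sm: "strict_mono_on {..<n} s" and sV: "s ` {..<n} = V"
    using sorted_enum_enumerates[OF fin(1)] unfolding s_def n_def by auto
  \<comment> \<open>with the cells kept fixed, moving the j-th point only changes the j-th term\<close>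
  define w where "w = s(j := c)"
  have "codebook k (w ` {..<n})" unfolding codebook_def using n0 kn
    by (auto intro: order_trans[OF card_image_le])
  then have "quant_error V \<le> quant_error (w ` {..<n})" using opt unfolding optimal_def by auto
  then have "(\<Sum>i<n. \<Phi> i (s i)) \<le> (\<Sum>i<n. \<Phi> i (w i))"
    using quant_error_eq_sum_dispersion[OF sm n0] quant_error_le_sum_dispersion[OF sm n0, of w] sV
    unfolding \<Phi>_def by simp
  moreover have "(\<Sum>i<n. \<Phi> i (x i)) = \<Phi> j (x j) + (\<Sum>i\<in>{..<n} - {j}. \<Phi> i (x i))" for x
    using j by (intro sum.remove) (simp_all add: n_def)
  moreover have "(\<Sum>i\<in>{..<n} - {j}. \<Phi> i (w i)) = (\<Sum>i\<in>{..<n} - {j}. \<Phi> i (s i))"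
    by (rule sum.cong) (auto simp: w_def)
  ultimately show "dispersion (density_on (voronoi_cell (sorted_enum V) (card V) j)) (sorted_enum V j)
      \<le> dispersion (density_on (voronoi_cell (sorted_enum V) (card V) j)) c"
    by (simp add: \<Phi>_def w_def s_def n_def)
qed

lemma quant_error_mono:
  assumes W: "w \<in> W" and V: "v \<in> V" and le: "\<And>y. \<Psi> y > 0 \<Longrightarrow> infdist y W \<le> infdist y V"
  shows "quant_error W \<le> quant_error V"
  unfolding quant_error_def
proof (rule integral_mono[OF integrable_quant_error[OF W] integrable_quant_error[OF V]])
  fix y
  show "infdist y W powr p * \<Psi> y \<le> infdist y V powr p * \<Psi> y"
  proof (cases "\<Psi> y > 0")
    case True
    have "infdist y W powr p \<le> infdist y V powr p" using le[OF True] p1 by (intro powr_mono2) (auto simp: infdist_nonneg)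
    then show ?thesis using True by (intro mult_right_mono) auto
  next
    case False
    then show ?thesis using Psi_nonneg[of y] by simp
  qed
qed

lemma quant_error_insert_less:
  assumes fin: "finite V" and ne: "V \<noteq> {}" and y0: "a < ereal y0" "ereal y0 < b" "y0 \<notin> V"
  shows "quant_error (insert y0 V) < quant_error V"
proof -
  obtain v where v: "v \<in> V" using ne by auto
  have cl: "closed V" using fin by (simp add: finite_imp_closed)
  define r where "r = infdist y0 V"
  have r: "r > 0" unfolding r_def using infdist_pos_not_in_closed[OF cl ne y0(3)] .
  obtain \<alpha> where al: "a < ereal \<alpha>" "y0 - r/2 < \<alpha>" "\<alpha> < y0" using ereal_between_left[OF y0(1), of "r/2"] r by auto
  obtain \<beta> where be: "ereal \<beta> < b" "\<beta> < y0 + r/2" "y0 < \<beta>" using ereal_between_right[OF y0(2), of "r/2"] r by auto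
  have strict: "infdist y (insert y0 V) powr p * \<Psi> y < infdist y V powr p * \<Psi> y" if y: "\<alpha> < y" "y < \<beta>" for y
  proof -
    have "infdist y (insert y0 V) \<le> \<bar>y - y0\<bar>" using infdist_le[of y0 "insert y0 V" y] by (simp add: dist_real_def)
    also have "\<bar>y - y0\<bar> < r / 2" unfolding abs_less_iff using y al be by linarith
    also have "r / 2 < infdist y V"
    proof -
      have "r \<le> infdist y V + \<bar>y0 - y\<bar>" unfolding r_def using infdist_triangle[of y0 V y] by (simp add: dist_real_def)
      moreover have "\<bar>y0 - y\<bar> < r / 2" unfolding abs_less_iff using y al be by linarith
      ultimately show ?thesis by simp
    qed
    finally have "infdist y (insert y0 V) < infdist y V" .
    hence "infdist y (insert y0 V) powr p < infdist y V powr p" using p1 by (intro powr_less_mono2) (auto simp: infdist_nonneg)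
    moreover have "\<Psi> y > 0" using Psi_pos[of y] al be y
      by (meson ereal_less_eq(3) less_imp_le order_less_le_trans order_le_less_trans)
    ultimately show ?thesis by simp
  qed
  show ?thesis unfolding quant_error_def
  proof (rule integral_less_if_less_on_Ioo[where \<alpha>=\<alpha> and \<beta>=\<beta>])
    show "integrable lborel (\<lambda>y. infdist y (insert y0 V) powr p * \<Psi> y)"
      "integrable lborel (\<lambda>y. infdist y V powr p * \<Psi> y)"
      using integrable_quant_error[OF insertI1] integrable_quant_error[OF v] .
  next
    fix y
    have "infdist y (insert y0 V) \<le> infdist y V" using ne by (intro infdist_mono) auto
    then have "infdist y (insert y0 V) powr p \<le> infdist y V powr p"
      using p1 by (intro powr_mono2) (auto simp: infdist_nonneg)
    then show "infdist y (insert y0 V) powr p * \<Psi> y \<le> infdist y V powr p * \<Psi> y"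
      using Psi_nonneg by (intro mult_right_mono) auto
  qed (use strict al be in auto)
qed

lemma exists_support_point_notin: assumes "finite V" shows "\<exists>y0. a < ereal y0 \<and> ereal y0 < b \<and> y0 \<notin> V"
proof -
  obtain \<alpha> \<beta> where ab': "a < ereal \<alpha>" "\<alpha> < \<beta>" "ereal \<beta> < b" using ereal_two_between[OF ab] by blast
  have "infinite {\<alpha><..<\<beta>}" using ab' by simp
  hence "{\<alpha><..<\<beta>} - V \<noteq> {}" using assms by (metis Diff_empty Diff_eq_empty_iff finite_subset)
  then obtain y0 where "y0 \<in> {\<alpha><..<\<beta>}" "y0 \<notin> V" by blast
  moreover have "ereal \<alpha> < ereal y0" "ereal y0 < ereal \<beta>" using \<open>y0 \<in> {\<alpha><..<\<beta>}\<close> by auto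
  hence "a < ereal y0" "ereal y0 < b" using less_trans[OF ab'(1)] less_trans[OF _ ab'(3)] by blast+
  ultimately show ?thesis by blast
qed

lemma optimal_less_small_codebook: assumes opt: "optimal k V" and W: "codebook k W" "card W < k" shows "quant_error V < quant_error W"
proof -
  obtain y0 where y0: "a < ereal y0" "ereal y0 < b" "y0 \<notin> W" using exists_support_point_notin W unfolding codebook_def by blast
  have "codebook k (insert y0 W)" using W y0 unfolding codebook_def by auto
  hence "quant_error V \<le> quant_error (insert y0 W)" using opt unfolding optimal_def by auto
  also have "\<dots> < quant_error W" using quant_error_insert_less W y0 unfolding codebook_def by auto
  finally show ?thesis .
qed

lemma card_optimal: assumes opt: "optimal k V" shows "card V = k"
proof (rule ccontr)
  assume "card V \<noteq> k"
  hence "card V < k" using opt unfolding optimal_def codebook_def by auto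
  then show False using optimal_less_small_codebook[OF opt _ \<open>card V < k\<close>] opt unfolding optimal_def by auto
qed

lemma quant_error_drop_empty_cell:
  assumes sm: "strict_mono_on {..<n} s" and j: "j < n" and n: "1 < n"
    and empty: "\<And>y. 0 < \<Psi> y \<Longrightarrow> y \<notin> voronoi_cell s n j"
  shows "quant_error (s ` ({..<n} - {j})) \<le> quant_error (s ` {..<n})"
proof -
  define i0 where "i0 = (if j = 0 then 1 else 0 :: nat)"
  have i0: "i0 < n" "i0 \<noteq> j" using n by (auto simp: i0_def)
  show ?thesis
  proof (rule quant_error_mono[of "s i0" _ "s i0"])
    show "s i0 \<in> s ` ({..<n} - {j})" "s i0 \<in> s ` {..<n}" using i0 by auto
    fix y assume "0 < \<Psi> y"
    have "0 < n" using n by simp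
    then obtain i where i: "i < n" "y \<in> voronoi_cell s n i" using voronoi_cell_cover[OF sm] by blast
    have "i \<noteq> j" using empty[OF \<open>0 < \<Psi> y\<close>] i by auto
    then have "s i \<in> s ` ({..<n} - {j})" using i by simp
    then have "infdist y (s ` ({..<n} - {j})) \<le> \<bar>y - s i\<bar>"
      using infdist_le[of "s i" "s ` ({..<n} - {j})" y] by (simp add: dist_real_def)
    also have "\<dots> = infdist y (s ` {..<n})" using infdist_voronoi_cell[OF sm i(2,1)] by simp
    finally show "infdist y (s ` ({..<n} - {j})) \<le> infdist y (s ` {..<n})" .
  qed
qed

lemma optimal_sorted_enum:
  assumes "optimal k V"
  shows "strict_mono_on {..<k} (sorted_enum V)" "sorted_enum V ` {..<k} = V" "0 < k"
    and "\<And>j. j < k \<Longrightarrow> is_centre (density_on (voronoi_cell (sorted_enum V) k j)) (sorted_enum V j)"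
proof -
  have fin: "finite V" "V \<noteq> {}" using assms by (simp_all add: optimal_def codebook_def)
  have cV: "card V = k" by (rule card_optimal[OF assms])
  show "strict_mono_on {..<k} (sorted_enum V)" "sorted_enum V ` {..<k} = V"
    using sorted_enum_enumerates[OF fin(1)] cV by simp_all
  show "0 < k" using fin by (simp add: cV[symmetric] card_gt_0_iff)
  show "is_centre (density_on (voronoi_cell (sorted_enum V) k j)) (sorted_enum V j)" if "j < k" for j
    using optimal_cell_centre[OF assms] that cV by simp
qed

lemma optimal_cell_meets_support:
  assumes opt: "optimal k V" and j: "j < k"
  shows "\<exists>y. 0 < \<Psi> y \<and> y \<in> voronoi_cell (sorted_enum V) k j"
proof (rule ccontr)
  assume empty: "\<nexists>y. 0 < \<Psi> y \<and> y \<in> voronoi_cell (sorted_enum V) k j"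
  define s where "s = sorted_enum V"
  note s = optimal_sorted_enum[OF opt, folded s_def]
  show False
  proof (cases "k = 1")
    case True
    obtain y where "a < ereal y" "ereal y < b" using exists_support_point_notin[of "{}"] by auto
    then have "0 < \<Psi> y" by (rule Psi_pos)
    moreover have "y \<in> voronoi_cell s k j" using True j by (simp add: voronoi_cell_def voronoi_bound_def)
    ultimately show False using empty by (simp add: s_def)
  next
    case False
    then have k: "1 < k" using j by simp
    define W where "W = s ` ({..<k} - {j})"
    have "quant_error W \<le> quant_error V"
      unfolding W_def s(2)[symmetric] using empty by (intro quant_error_drop_empty_cell[OF s(1) j k]) (auto simp: s_def)
    moreover have "quant_error V < quant_error W"
    proof (rule optimal_less_small_codebook[OF opt])
      have "card W \<le> card ({..<k} - {j})" unfolding W_def by (rule card_image_le) simp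
      then show "card W < k" using j by simp
      have "s (1 - j) \<in> W" unfolding W_def using k by (intro imageI) (cases j, auto)
      then show "codebook k W" using \<open>card W < k\<close> unfolding codebook_def W_def by auto
    qed
    ultimately show False by simp
  qed
qed

lemma optimal_first_in_support:
  assumes opt: "optimal k V"
  shows "a < ereal (sorted_enum V 0)"
proof (rule ccontr)
  define s where "s = sorted_enum V"
  note s = optimal_sorted_enum[OF opt, folded s_def]
  assume "\<not> a < ereal (sorted_enum V 0)"
  then have s0: "ereal (s 0) \<le> a" by (simp add: s_def)
  obtain y0 where y0: "0 < \<Psi> y0" "y0 \<in> voronoi_cell s k 0"
    using optimal_cell_meets_support[OF opt s(3)] by (auto simp: s_def)
  then have "a < ereal y0" "ereal y0 < b" "ereal y0 < voronoi_bound s k 1"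
    using Psi_pos_iff by (auto simp: voronoi_cell_def)
  then have "a < voronoi_bound s k 1" by (blast intro: less_trans)
  with ab have "a < min (voronoi_bound s k 1) b" by simp
  then obtain \<alpha> \<beta> where al: "a < ereal \<alpha>" "\<alpha> < \<beta>" "ereal \<beta> < min (voronoi_bound s k 1) b"
    using ereal_two_between by blast
  show False
  proof (rule is_centre_left_of_mass[OF moment_density_on[OF voronoi_cell_borel] s(4)[OF s(3)] _ _ al(2)])
    fix y assume "y \<le> s 0"
    then have "ereal y \<le> a" using s0 by (meson ereal_less_eq(3) order_trans)
    then have "\<Psi> y = 0" by (intro Psi_zero) auto
    then show "density_on (voronoi_cell s k 0) y = 0" unfolding density_on_def by simp
  next
    show "s 0 \<le> \<alpha>" using s0 al(1) by (meson ereal_less_eq(3) le_less_trans less_imp_le)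
  next
    fix y assume "\<alpha> < y" "y < \<beta>"
    then have y: "ereal \<alpha> < ereal y" "ereal y < ereal \<beta>" by simp_all
    have "ereal y < voronoi_bound s k 1" "ereal y < b" "a < ereal y"
      using less_trans[OF y(2)] less_trans[OF al(1) y(1)] al(3) by auto
    then show "density_on (voronoi_cell s k 0) y > 0" unfolding density_on_def voronoi_cell_def using Psi_pos by auto
  qed
qed

lemma optimal_last_in_support:
  assumes opt: "optimal k V"
  shows "ereal (sorted_enum V (k - 1)) < b"
proof (rule ccontr)
  define s where "s = sorted_enum V"
  note s = optimal_sorted_enum[OF opt, folded s_def]
  have k: "k - 1 < k" "Suc (k - 1) = k" using s(3) by auto
  assume "\<not> ereal (sorted_enum V (k - 1)) < b"
  then have s0: "b \<le> ereal (s (k - 1))" by (simp add: s_def)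
  obtain y0 where y0: "0 < \<Psi> y0" "y0 \<in> voronoi_cell s k (k - 1)"
    using optimal_cell_meets_support[OF opt k(1)] by (auto simp: s_def)
  then have "a < ereal y0" "ereal y0 < b" "voronoi_bound s k (k - 1) \<le> ereal y0"
    using Psi_pos_iff by (auto simp: voronoi_cell_def)
  then have "voronoi_bound s k (k - 1) < b" by (blast intro: le_less_trans)
  with ab have "max (voronoi_bound s k (k - 1)) a < b" by simp
  then obtain \<alpha> \<beta> where al: "max (voronoi_bound s k (k - 1)) a < ereal \<alpha>" "\<alpha> < \<beta>" "ereal \<beta> < b"
    using ereal_two_between by blast
  show False
  proof (rule is_centre_right_of_mass[OF moment_density_on[OF voronoi_cell_borel] s(4)[OF k(1)] _ _ al(2)])
    fix y assume "s (k - 1) \<le> y"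
    then have "b \<le> ereal y" using s0 by (meson ereal_less_eq(3) order_trans)
    then have "\<Psi> y = 0" by (intro Psi_zero) auto
    then show "density_on (voronoi_cell s k (k - 1)) y = 0" unfolding density_on_def by simp
  next
    show "\<beta> \<le> s (k - 1)" using s0 al(3) by (meson ereal_less_eq(3) less_le_trans less_imp_le)
  next
    fix y assume "\<alpha> < y" "y < \<beta>"
    then have y: "ereal \<alpha> < ereal y" "ereal y < ereal \<beta>" by simp_all
    have "voronoi_bound s k (k - 1) < ereal y" "ereal y < b" "a < ereal y"
      using less_trans[OF _ y(1)] less_trans[OF y(2) al(3)] al(1) by auto
    then show "density_on (voronoi_cell s k (k - 1)) y > 0"
      unfolding density_on_def voronoi_cell_def using Psi_pos k(2) by auto
  qed
qed

lemma optimal_in_support: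
  assumes opt: "optimal k V" and j: "j < k"
  shows "a < ereal (sorted_enum V j) \<and> ereal (sorted_enum V j) < b"
proof -
  note s = optimal_sorted_enum[OF opt]
  have "sorted_enum V 0 \<le> sorted_enum V j" "sorted_enum V j \<le> sorted_enum V (k - 1)"
    using strict_mono_on_lessThan_le[OF s(1)] j by auto
  then show ?thesis using optimal_first_in_support[OF opt] optimal_last_in_support[OF opt]
    by (meson ereal_less_eq(3) less_le_trans le_less_trans)
qed

definition self_consistent :: "nat \<Rightarrow> (nat \<Rightarrow> real) \<Rightarrow> bool" where
  "self_consistent k s \<longleftrightarrow> strict_mono_on {..<k} s \<and> (\<forall>i<k. a < ereal (s i) \<and> ereal (s i) < b)
     \<and> (\<forall>i<k. is_centre (density_on (voronoi_cell s k i)) (s i))"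

lemma self_consistentD:
  assumes "self_consistent k s"
  shows "strict_mono_on {..<k} s" "i < k \<Longrightarrow> a < ereal (s i) \<and> ereal (s i) < b"
    "i < k \<Longrightarrow> is_centre (density_on (voronoi_cell s k i)) (s i)"
  using assms by (auto simp: self_consistent_def)

lemma optimal_self_consistent: "optimal k V \<Longrightarrow> self_consistent k (sorted_enum V)"
  using optimal_sorted_enum optimal_in_support by (simp add: self_consistent_def)

lemma quant_error_lower_limit:
  assumes C: "\<And>n. C n \<noteq> {}" and lim: "(\<lambda>n. quant_error (C n)) \<longlonglongrightarrow> I"
    and \<theta>: "\<theta> \<in> borel_measurable borel" "\<And>y. 0 \<le> \<theta> y"
    and ev: "\<And>y \<epsilon>. 0 < \<epsilon> \<Longrightarrow> eventually (\<lambda>n. \<theta> y - \<epsilon> < infdist y (C n)) sequentially"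
  shows "(\<integral>\<^sup>+ y. ennreal (\<theta> y powr p * \<Psi> y) \<partial>lborel) \<le> ennreal I"
proof -
  define m where "m n y = min (infdist y (C n)) (\<theta> y)" for n y
  have mlim: "(\<lambda>n. m n y) \<longlonglongrightarrow> \<theta> y" for y
    unfolding tendsto_iff
  proof (intro allI impI)
    fix \<epsilon> :: real assume e: "0 < \<epsilon>"
    show "eventually (\<lambda>n. dist (m n y) (\<theta> y) < \<epsilon>) sequentially"
      using ev[OF e, of y]
    proof eventually_elim
      case (elim n)
      then show ?case using e by (auto simp: m_def dist_real_def min_def)
    qed
  qed
  have m0: "0 \<le> m n y" for n y using \<theta>(2) by (simp add: m_def infdist_nonneg)
  have p0: "0 < p" using p1 by simp
  have hlim: "(\<lambda>n. ennreal (m n y powr p * \<Psi> y)) \<longlonglongrightarrow> ennreal (\<theta> y powr p * \<Psi> y)" for y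
    by (intro tendsto_ennrealI tendsto_mult_right tendsto_powr' mlim tendsto_const) (use p0 m0 in auto)
  have meas: "(\<lambda>y. ennreal (m n y powr p * \<Psi> y)) \<in> borel_measurable lborel" for n
    unfolding m_def using \<theta>(1) by measurable
  have "(\<integral>\<^sup>+ y. ennreal (\<theta> y powr p * \<Psi> y) \<partial>lborel)
      = (\<integral>\<^sup>+ y. liminf (\<lambda>n. ennreal (m n y powr p * \<Psi> y)) \<partial>lborel)"
    using lim_imp_Liminf[OF _ hlim] by simp
  also have "\<dots> \<le> liminf (\<lambda>n. \<integral>\<^sup>+ y. ennreal (m n y powr p * \<Psi> y) \<partial>lborel)"
    by (rule nn_integral_liminf[OF meas])
  also have "\<dots> \<le> liminf (\<lambda>n. ennreal (quant_error (C n)))"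
  proof (rule Liminf_mono, rule always_eventually, rule allI)
    fix n
    obtain v where v: "v \<in> C n" using C by blast
    have "(\<integral>\<^sup>+ y. ennreal (m n y powr p * \<Psi> y) \<partial>lborel) \<le> (\<integral>\<^sup>+ y. ennreal (infdist y (C n) powr p * \<Psi> y) \<partial>lborel)"
    proof (rule Nonnegative_Lebesgue_Integration.nn_integral_mono)
      fix y
      have "m n y powr p \<le> infdist y (C n) powr p" using p1 m0 by (intro powr_mono2) (auto simp: m_def)
      hence "m n y powr p * \<Psi> y \<le> infdist y (C n) powr p * \<Psi> y" using Psi_nonneg by (intro mult_right_mono) auto
      then show "ennreal (m n y powr p * \<Psi> y) \<le> ennreal (infdist y (C n) powr p * \<Psi> y)" by (rule ennreal_leI)
    qed
    also have "\<dots> = ennreal (quant_error (C n))" unfolding quant_error_def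
      by (rule nn_integral_eq_integral[OF integrable_quant_error[OF v]]) (simp add: Psi_nonneg)
    finally show "(\<integral>\<^sup>+ y. ennreal (m n y powr p * \<Psi> y) \<partial>lborel) \<le> ennreal (quant_error (C n))" .
  qed
  also have "\<dots> = ennreal I" using lim_imp_Liminf[OF _ tendsto_ennrealI[OF lim]] by simp
  finally show ?thesis .
qed

lemma codebook_as_image: assumes q: "codebook k W" shows "\<exists>w. w ` {..<k} = W"
proof -
  have fin: "finite W" and ne: "W \<noteq> {}" and kW: "card W \<le> k" using q unfolding codebook_def by auto
  define n where "n = card W"
  have n0: "0 < n" using fin ne unfolding n_def by (simp add: card_gt_0_iff)
  have im: "sorted_enum W ` {..<n} = W" using sorted_enum_enumerates(2)[OF fin] unfolding n_def .
  define w where "w i = sorted_enum W (min i (n - 1))" for i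
  have "w ` {..<k} = sorted_enum W ` {..<n}"
  proof
    show "w ` {..<k} \<subseteq> sorted_enum W ` {..<n}" using n0 by (auto simp: w_def)
    show "sorted_enum W ` {..<n} \<subseteq> w ` {..<k}"
    proof
      fix x assume "x \<in> sorted_enum W ` {..<n}"
      then obtain j where j: "j < n" "x = sorted_enum W j" by auto
      have "w j = x" using j by (simp add: w_def)
      moreover have "j < k" using j kW unfolding n_def by simp
      ultimately show "x \<in> w ` {..<k}" by blast
    qed
  qed
  then have "w ` {..<k} = W" using im by simp
  then show ?thesis by (intro exI[where x=w])
qed

lemma infdist_finite_image_attained: fixes k :: nat assumes "0 < k" shows "\<exists>i<k. infdist y (c ` {..<k}) = \<bar>y - c i\<bar>"
proof -
  have cl: "closed (c ` {..<k})" by (intro finite_imp_closed) auto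
  have ne: "c ` {..<k} \<noteq> {}" using assms by auto
  obtain x where "x \<in> c ` {..<k}" "infdist y (c ` {..<k}) = dist y x"
    using infdist_attains_inf[OF cl ne, of y] by blast
  then show ?thesis by (auto simp: dist_real_def)
qed

lemma eventually_infdist_image_gt: fixes k :: nat assumes k0: "0 < k" and ev: "eventually (\<lambda>n. \<forall>i<k. t < \<bar>y - c n i\<bar>) F"
  shows "eventually (\<lambda>n. t < infdist y (c n ` {..<k})) F"
  using ev
proof eventually_elim
  case (elim n)
  obtain i where "i < k" "infdist y (c n ` {..<k}) = \<bar>y - c n i\<bar>" using infdist_finite_image_attained[OF k0] by blast
  then show ?case using elim by simp
qed

definition uniqueness_conditions :: bool where
  "uniqueness_conditions \<longleftrightarrow> (\<bar>a\<bar> \<noteq> \<infinity> \<or> \<bar>b\<bar> \<noteq> \<infinity>)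
    \<or> (\<forall>t. 0 < t \<and> ereal t < b - a \<longrightarrow> infinite (Gs \<Psi> t ` {y. a < ereal y \<and> ereal y < b}))
    \<or> continuous_on UNIV \<Psi>"

lemma uniqueness_conditions_finite_ratio_range:
  assumes ainf: "a = -\<infinity>" and binf: "b = \<infinity>" and E: "0 < E" and fin: "finite (Gs \<Psi> E ` UNIV)"
  shows "\<not> uniqueness_conditions"
proof
  have pos: "\<Psi> y > 0" for y using Psi_pos ainf binf by simp
  have UN: "{y. a < ereal y \<and> ereal y < b} = UNIV" and "ereal E < b - a" using ainf binf by auto
  then have "\<not> (\<forall>t. 0 < t \<and> ereal t < b - a \<longrightarrow> infinite (Gs \<Psi> t ` {y. a < ereal y \<and> ereal y < b}))"
    using E fin by auto
  moreover assume uniqueness_conditions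
  moreover have "\<bar>a\<bar> = \<infinity>" "\<bar>b\<bar> = \<infinity>" using ainf binf by simp_all
  ultimately have cont: "continuous_on UNIV \<Psi>" unfolding uniqueness_conditions_def by blast
  have "continuous_on UNIV (\<lambda>y. \<Psi> (y + E))"
    by (rule continuous_on_compose2[OF cont]) (auto intro!: continuous_intros)
  then have "continuous_on UNIV (Gs \<Psi> E)"
    unfolding Gs_def using cont pos by (intro continuous_on_divide) (auto simp: less_imp_neq[symmetric])
  then have "connected (Gs \<Psi> E ` UNIV)" by (rule connected_continuous_image[OF _ connected_UNIV])
  then obtain c where c: "Gs \<Psi> E ` UNIV = {c}" using fin connected_finite_iff_sing by auto
  have "\<Psi> (y + E) = c * \<Psi> y" for y
  proof -
    have "Gs \<Psi> E y = c" using c by blast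
    then show ?thesis using pos[of y] by (simp add: Gs_def field_simps)
  qed
  moreover from this have "c = 1" by (rule integrable_geometric_shift_factor[OF pos _ Psi_int])
  ultimately show False using continuous_periodic_not_integrable[OF cont pos E] Psi_int by simp
qed

lemma minimizing_codebook_sequence:
  fixes k :: nat
  obtains c :: "nat \<Rightarrow> nat \<Rightarrow> real" and L :: "nat \<Rightarrow> ereal"
  where "(\<lambda>n. quant_error (c n ` {..<k})) \<longlonglongrightarrow> (INF w. quant_error (w ` {..<k}))"
    and "\<And>i. i < k \<Longrightarrow> (\<lambda>n. ereal (c n i)) \<longlonglongrightarrow> L i"
proof -
  define F where "F w = quant_error (w ` {..<k})" for w :: "nat \<Rightarrow> real"
  define I where "I = (INF w. F w)"
  have bdd: "bdd_below (range F)" unfolding bdd_below_def F_def using quant_error_nonneg by blast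
  have "\<exists>w. F w < I + 1 / real (Suc n)" for n
  proof -
    have "I < I + 1 / real (Suc n)" by simp
    then show ?thesis unfolding I_def using cINF_less_iff[OF UNIV_not_empty bdd] by blast
  qed
  then obtain cs where cs: "\<And>n. F (cs n) < I + 1 / real (Suc n)" by metis
  have "(\<lambda>n. F (cs n)) \<longlonglongrightarrow> I"
  proof (rule tendsto_sandwich[of "\<lambda>n. I" _ _ "\<lambda>n. I + 1 / real (Suc n)"])
    show "eventually (\<lambda>n. I \<le> F (cs n)) sequentially"
      unfolding I_def by (intro always_eventually allI cINF_lower[OF bdd]) simp
    show "eventually (\<lambda>n. F (cs n) \<le> I + 1 / real (Suc n)) sequentially" using cs by (simp add: less_imp_le)
    have "(\<lambda>n. I + inverse (real (Suc n))) \<longlonglongrightarrow> I + 0"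
      by (intro tendsto_add tendsto_const LIMSEQ_inverse_real_of_nat)
    then show "(\<lambda>n. I + 1 / real (Suc n)) \<longlonglongrightarrow> I" by (simp add: inverse_eq_divide)
  qed simp
  moreover obtain r where r: "strict_mono r" "\<forall>i<k. \<exists>l. (\<lambda>n. ereal (cs (r n) i)) \<longlonglongrightarrow> l"
    using ereal_vector_convergent_subseq[where X="\<lambda>n i. ereal (cs n i)" and k=k] by blast
  ultimately have "(\<lambda>n. quant_error (cs (r n) ` {..<k})) \<longlonglongrightarrow> (INF w. quant_error (w ` {..<k}))"
    using LIMSEQ_subseq_LIMSEQ by (fastforce simp: comp_def F_def I_def)
  moreover obtain L where "\<And>i. i < k \<Longrightarrow> (\<lambda>n. ereal (cs (r n) i)) \<longlonglongrightarrow> L i" using r(2) by metis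
  ultimately show ?thesis by (rule that)
qed

lemma escaping_codebooks_cost_unbounded:
  fixes k :: nat
  assumes k: "0 < k" and lim: "(\<lambda>n. quant_error (c n ` {..<k})) \<longlonglongrightarrow> I"
    and esc: "\<And>i. i < k \<Longrightarrow> (\<lambda>n. ereal (c n i)) \<longlonglongrightarrow> L i" "\<And>i. i < k \<Longrightarrow> \<bar>L i\<bar> = \<infinity>"
  shows False
proof -
  have I0: "0 \<le> I" using lim quant_error_nonneg by (intro LIMSEQ_le_const) auto
  have bound: "M powr p * (\<integral>y. \<Psi> y \<partial>lborel) \<le> I" if M: "0 \<le> M" for M
  proof -
    have "(\<integral>\<^sup>+ y. ennreal (M powr p * \<Psi> y) \<partial>lborel) \<le> ennreal I"
    proof (rule quant_error_lower_limit[OF _ lim])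
      show "c n ` {..<k} \<noteq> {}" for n using k by auto
      fix y \<epsilon> :: real
      have "eventually (\<lambda>n. \<forall>i\<in>{..<k}. M - \<epsilon> < \<bar>y - c n i\<bar>) sequentially"
        using esc by (intro eventually_ball_finite ballI eventually_abs_diff_gt_if_tendsto_infinity) auto
      then show "eventually (\<lambda>n. M - \<epsilon> < infdist y (c n ` {..<k})) sequentially"
        by (intro eventually_infdist_image_gt[OF k]) (auto elim: eventually_mono)
    qed (use M in auto)
    also have "(\<integral>\<^sup>+ y. ennreal (M powr p * \<Psi> y) \<partial>lborel) = ennreal (\<integral>y. M powr p * \<Psi> y \<partial>lborel)"
      by (rule nn_integral_eq_integral) (auto intro: Psi_int simp: Psi_nonneg)
    finally show ?thesis using I0 by (simp add: ennreal_le_iff)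
  qed
  define M where "M = max 1 ((I + 1) / (\<integral>y. \<Psi> y \<partial>lborel))"
  have M1: "1 \<le> M" unfolding M_def by simp
  have "M powr 1 \<le> M powr p" using M1 p1 by (intro powr_mono) auto
  then have "(I + 1) / (\<integral>y. \<Psi> y \<partial>lborel) \<le> M powr p" using M1 unfolding M_def by simp
  then have "I + 1 \<le> M powr p * (\<integral>y. \<Psi> y \<partial>lborel)" using integral_Psi_pos by (simp add: divide_le_eq)
  moreover have "M powr p * (\<integral>y. \<Psi> y \<partial>lborel) \<le> I" using bound M1 by simp
  ultimately show False by simp
qed

lemma quant_error_finite_limits_le:
  fixes k :: nat
  assumes k: "0 < k" and lim: "(\<lambda>n. quant_error (c n ` {..<k})) \<longlonglongrightarrow> I"
    and L: "\<And>i. i < k \<Longrightarrow> (\<lambda>n. ereal (c n i)) \<longlonglongrightarrow> L i"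
    and C: "C = (\<lambda>i. real_of_ereal (L i)) ` {i. i < k \<and> \<bar>L i\<bar> \<noteq> \<infinity>}" "C \<noteq> {}"
  shows "quant_error C \<le> I"
proof -
  have I0: "0 \<le> I" using lim quant_error_nonneg by (intro LIMSEQ_le_const) auto
  obtain v where v: "v \<in> C" using C(2) by blast
  have "(\<integral>\<^sup>+ y. ennreal (infdist y C powr p * \<Psi> y) \<partial>lborel) \<le> ennreal I"
  proof (rule quant_error_lower_limit[OF _ lim])
    show "c n ` {..<k} \<noteq> {}" for n using k by auto
    fix y \<epsilon> :: real assume \<epsilon>: "0 < \<epsilon>"
    have "eventually (\<lambda>n. infdist y C - \<epsilon> < \<bar>y - c n i\<bar>) sequentially" if i: "i < k" for i
    proof (cases "\<bar>L i\<bar> = \<infinity>")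
      case False
      then have "(\<lambda>n. c n i) \<longlonglongrightarrow> real_of_ereal (L i)"
        using L[OF i] by (cases "L i") (auto simp: lim_ereal)
      then have "(\<lambda>n. \<bar>y - c n i\<bar>) \<longlonglongrightarrow> \<bar>y - real_of_ereal (L i)\<bar>" by (intro tendsto_intros)
      moreover have "infdist y C \<le> \<bar>y - real_of_ereal (L i)\<bar>"
        using infdist_le[of "real_of_ereal (L i)" C y] False i C(1) by (auto simp: dist_real_def)
      ultimately show ?thesis using \<epsilon> by (intro order_tendstoD(1)) auto
    qed (use L[OF i] in \<open>rule eventually_abs_diff_gt_if_tendsto_infinity\<close>)
    then have "eventually (\<lambda>n. \<forall>i\<in>{..<k}. infdist y C - \<epsilon> < \<bar>y - c n i\<bar>) sequentially"
      by (intro eventually_ball_finite) auto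
    then show "eventually (\<lambda>n. infdist y C - \<epsilon> < infdist y (c n ` {..<k})) sequentially"
      by (intro eventually_infdist_image_gt[OF k]) (auto elim: eventually_mono)
  qed (auto simp: infdist_nonneg)
  also have "(\<integral>\<^sup>+ y. ennreal (infdist y C powr p * \<Psi> y) \<partial>lborel) = ennreal (quant_error C)"
    unfolding quant_error_def by (intro nn_integral_eq_integral integrable_quant_error[OF v]) (auto simp: Psi_nonneg)
  finally show ?thesis using I0 by (simp add: ennreal_le_iff)
qed

lemma optimal_exists:
  fixes k :: nat assumes k: "0 < k" shows "\<exists>V. optimal k V"
proof -
  obtain c L where lim: "(\<lambda>n. quant_error (c n ` {..<k})) \<longlonglongrightarrow> (INF w. quant_error (w ` {..<k}))"
    and L: "\<And>i. i < k \<Longrightarrow> (\<lambda>n. ereal (c n i)) \<longlonglongrightarrow> L i"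
    by (rule minimizing_codebook_sequence[of k]) blast
  define C where "C = (\<lambda>i. real_of_ereal (L i)) ` {i. i < k \<and> \<bar>L i\<bar> \<noteq> \<infinity>}"
  have "C \<noteq> {}" using escaping_codebooks_cost_unbounded[OF k lim L] unfolding C_def by blast
  have "optimal k C" unfolding optimal_def
  proof (intro conjI allI impI)
    have "card C \<le> card {i. i < k \<and> \<bar>L i\<bar> \<noteq> \<infinity>}" unfolding C_def by (rule card_image_le) simp
    also have "\<dots> \<le> k" using card_mono[of "{..<k}" "{i. i < k \<and> \<bar>L i\<bar> \<noteq> \<infinity>}"] by auto
    finally show "codebook k C" using \<open>C \<noteq> {}\<close> by (simp add: codebook_def C_def)
    fix W assume "codebook k W"
    then obtain w where "w ` {..<k} = W" using codebook_as_image by blast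
    moreover have "(INF w. quant_error (w ` {..<k})) \<le> quant_error (w ` {..<k})"
      by (rule cINF_lower) (auto simp: bdd_below_def intro: quant_error_nonneg)
    ultimately show "quant_error C \<le> quant_error W"
      using quant_error_finite_limits_le[OF k lim L C_def \<open>C \<noteq> {}\<close>] by simp
  qed
  then show ?thesis by blast
qed

end

section \<open>Uniqueness of optimal codebooks\<close>

locale monotone_ratio_quantization = quantization +
  assumes G_mono: "\<And>s y z. 0 < s \<Longrightarrow> ereal s < b - a \<Longrightarrow> a < ereal y \<Longrightarrow> y \<le> z \<Longrightarrow>
                   ereal z < b \<Longrightarrow> Gs \<Psi> s z \<le> Gs \<Psi> s y"
begin

lemma shift_ratio_mono:
  assumes y: "a < ereal y" and yz: "y \<le> z" and z: "ereal (z + e) < b" and e: "0 \<le> e"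
  shows "\<Psi> (z + e) * \<Psi> y \<le> \<Psi> (y + e) * \<Psi> z"
proof (cases "e = 0")
  case False
  have yz': "ereal y \<le> ereal z" and "ereal z \<le> ereal (z + e)" "ereal (y + e) \<le> ereal (z + e)"
    using yz e by simp_all
  then have zb: "ereal z < b" and eb: "ereal e < b - a" and za: "a < ereal z" and yb: "ereal y < b"
    using z y ereal_shift_less[OF y] by (meson le_less_trans less_le_trans)+
  then have "Gs \<Psi> e z \<le> Gs \<Psi> e y" using G_mono[of e y z] False e y yz by simp
  moreover have "0 < \<Psi> y" "0 < \<Psi> z" using Psi_pos y za zb yb by auto
  ultimately show ?thesis by (simp add: Gs_def field_simps)
qed (simp add: mult.commute)

text \<open>By monotonicity of the ratios, the translated cell density lies below \<kappa> times the
  original one to the right of m and above it to the left; as both have centre m they coincide.\<close>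
lemma cell_density_ratio_AE:
  fixes L R L' R' :: ereal and m e :: real
  defines "D \<equiv> density_on {y. L \<le> ereal y \<and> ereal y < R}" and "D' \<equiv> density_on {y. L' \<le> ereal y \<and> ereal y < R'}"
  assumes m: "a < ereal m" "ereal (m + e) < b" and e: "0 \<le> e"
    and inside: "L < ereal m" "ereal m < R" "ereal (m + e) < R'"
    and LL: "L' \<le> L + ereal e" and RR: "R' \<le> R + ereal e"
    and c1: "is_centre D m" and c2: "is_centre D' (m + e)"
  shows "AE y in lborel. D' (y + e) = (\<Psi> (m + e) / \<Psi> m) * D y"
proof -
  have "ereal m \<le> ereal (m + e)" using e by simp
  then have Pm: "\<Psi> m > 0" using Psi_pos m by (meson le_less_trans)
  define \<kappa> where "\<kappa> = \<Psi> (m + e) / \<Psi> m"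
  have k0: "\<kappa> \<ge> 0" unfolding \<kappa>_def using Pm Psi_nonneg by simp
  have MD: "moment_density D" unfolding D_def by (rule moment_density_on) measurable
  have MD': "moment_density (\<lambda>y. D' (y + e))"
    unfolding D'_def by (rule moment_density_shift, rule moment_density_on) measurable
  have c2': "is_centre (\<lambda>y. D' (y + e)) m" using is_centre_shift[OF c2, of e] by simp
  show ?thesis unfolding \<kappa>_def[symmetric]
  proof (rule AE_eq_scaled_if_centres[OF MD MD' k0 c1 c2' order_refl])
    fix y assume y: "y > m"
    show "D' (y + e) \<le> \<kappa> * D y"
    proof (cases "L' \<le> ereal (y + e) \<and> ereal (y + e) < R' \<and> \<Psi> (y + e) > 0")
      case False
      then have "D' (y + e) = 0" unfolding D'_def density_on_def using Psi_nonneg[of "y+e"] by (auto simp: indicator_def)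
      then show ?thesis using k0 by (simp add: D_def density_on_nonneg)
    next
      case True
      have "ereal (y + e) < R + ereal e" using True RR by (meson less_le_trans)
      then have "ereal y < R" by (rule ereal_less_shift)
      moreover have "ereal m < ereal y" using y by simp
      then have "L \<le> ereal y" using inside(1) by (meson less_trans less_imp_le)
      ultimately have DD: "D y = \<Psi> y" "D' (y + e) = \<Psi> (y + e)" using True by (auto simp: D_def D'_def density_on_def)
      have "\<Psi> (y + e) * \<Psi> m \<le> \<Psi> (m + e) * \<Psi> y"
        using shift_ratio_mono[OF m(1) _ _ e, of y] y True Psi_pos_iff by auto
      then show ?thesis using DD Pm by (simp add: \<kappa>_def field_simps)
    qed
  next
    fix y assume y: "y < m"
    show "\<kappa> * D y \<le> D' (y + e)"
    proof (cases "L \<le> ereal y \<and> ereal y < R \<and> \<Psi> y > 0")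
      case False
      then have "D y = 0" unfolding D_def density_on_def using Psi_nonneg[of y] by (auto simp: indicator_def)
      then show ?thesis by (simp add: D'_def density_on_nonneg)
    next
      case True
      have "L' \<le> ereal (y + e)" using ereal_le_shift[OF LL] True by auto
      moreover have "ereal (y + e) < ereal (m + e)" using y by simp
      then have "ereal (y + e) < R'" using inside(3) by (rule less_trans)
      ultimately have DD: "D y = \<Psi> y" "D' (y + e) = \<Psi> (y + e)" using True by (auto simp: D_def D'_def density_on_def)
      have "\<Psi> (m + e) * \<Psi> y \<le> \<Psi> (y + e) * \<Psi> m"
        using shift_ratio_mono[OF _ _ m(2) e, of y] y True Psi_pos_iff by auto
      then show ?thesis using DD Pm by (simp add: \<kappa>_def field_simps)
    qed
  qed
qed

text \<open>The j-th point moves right and neither boundary of its cell moves further.\<close>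
context
  fixes s s' :: "nat \<Rightarrow> real" and k j :: nat
  assumes sc: "self_consistent k s" "self_consistent k s'" and j: "j < k" and e0: "s j \<le> s' j"
    and L: "0 < j \<Longrightarrow> (s' (j-1) + s' j)/2 - (s (j-1) + s j)/2 \<le> s' j - s j"
    and R: "Suc j < k \<Longrightarrow> (s' j + s' (Suc j))/2 - (s j + s (Suc j))/2 \<le> s' j - s j"
begin

lemma shifted_cell_AE:
  "AE y in lborel. density_on (voronoi_cell s' k j) (y + (s' j - s j))
     = \<Psi> (s' j) / \<Psi> (s j) * density_on (voronoi_cell s k j) y"
proof -
  define e where "e = s' j - s j"
  have e0': "0 \<le> e" using e0 by (simp add: e_def)
  have sje: "s j + e = s' j" by (simp add: e_def)
  note sm = self_consistentD(1)[OF sc(1)] self_consistentD(1)[OF sc(2)]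
  have insj: "a < ereal (s j)" "ereal (s j) < b" "a < ereal (s' j)" "ereal (s' j) < b"
    using self_consistentD(2)[OF sc(1) j] self_consistentD(2)[OF sc(2) j] by auto
  note cm = self_consistentD(3)[OF sc(1) j] self_consistentD(3)[OF sc(2) j]
  have LL: "voronoi_bound s' k j \<le> voronoi_bound s k j + ereal e"
  proof (cases "j = 0")
    case False
    have "0 < j" using False by simp
    hence "(s' (j-1) + s' j)/2 - (s (j-1) + s j)/2 \<le> s' j - s j" by (rule L)
    hence "(s' (j-1) + s' j)/2 \<le> (s (j-1) + s j)/2 + e" unfolding e_def by linarith
    then show ?thesis using False j by (simp add: voronoi_bound_mid)
  qed simp
  have RR: "voronoi_bound s' k (Suc j) \<le> voronoi_bound s k (Suc j) + ereal e"
  proof (cases "Suc j < k")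
    case True
    have "(s' j + s' (Suc j))/2 - (s j + s (Suc j))/2 \<le> s' j - s j" using True by (rule R)
    hence "(s' j + s' (Suc j))/2 \<le> (s j + s (Suc j))/2 + e" unfolding e_def by linarith
    then show ?thesis using True by (simp add: voronoi_bound_mid)
  next
    case False
    then show ?thesis using j by simp
  qed
  have "AE y in lborel. density_on (voronoi_cell s' k j) (y + e) = \<Psi> (s' j) / \<Psi> (s j) * density_on (voronoi_cell s k j) y"
    using cell_density_ratio_AE[where L="voronoi_bound s k j" and R="voronoi_bound s k (Suc j)"
        and L'="voronoi_bound s' k j" and R'="voronoi_bound s' k (Suc j)" and m="s j" and e=e]
      insj e0' voronoi_bound_less_point[OF sm(1) j] voronoi_bound_less_point[OF sm(2) j] LL RR cm
    unfolding sje voronoi_cell_def by simp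
  then show ?thesis by (simp add: e_def)
qed

lemma shifted_cell_left_bound:
  assumes j0: "0 < j"
  shows "(s' (j-1) + s' j)/2 - (s (j-1) + s j)/2 = s' j - s j"
proof (rule ccontr)
  define e where "e = s' j - s j"
  note AE = shifted_cell_AE[folded e_def]
  note sm = self_consistentD(1)[OF sc(1)] self_consistentD(1)[OF sc(2)]
  note ins = self_consistentD(2)[OF sc(1)] self_consistentD(2)[OF sc(2)]
  have insj: "a < ereal (s j)" "ereal (s j) < b" "a < ereal (s' j)" "ereal (s' j) < b" using ins j by auto
  have kpos: "\<Psi> (s' j) / \<Psi> (s j) > 0" using Psi_pos insj by simp
  define tt where "tt = (s (j-1) + s j)/2"
  define tt' where "tt' = (s' (j-1) + s' j)/2"
  assume "\<not> ?thesis"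
  hence lt: "tt' - tt < e" using L[OF j0] unfolding tt_def tt'_def e_def by simp
  have jm: "j - 1 < j" "j - 1 < k" using j0 j by auto
  have tts: "tt' < s' j" using strict_mono_on_lessThan_less[OF sm(2) jm(1) j] unfolding tt'_def by simp
  have att: "a < ereal tt'" unfolding tt'_def using ins[of "j-1"] ins[of j] jm j by (intro ereal_less_midpoint) auto
  have Tj: "voronoi_bound s k j = ereal tt" "voronoi_bound s' k j = ereal tt'" using j0 j by (simp_all add: voronoi_bound_mid tt_def tt'_def)
  show False
  proof (rule AE_lborel_Ioo_contra[OF AE, of "tt' - e" "min tt (s' j - e)"])
    show "tt' - e < min tt (s' j - e)" using lt tts by simp
    fix y assume y: "tt' - e < y" "y < min tt (s' j - e)"
    have "ereal y < voronoi_bound s k j" using y Tj by simp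
    hence r: "density_on (voronoi_cell s k j) y = 0" by (simp add: density_on_def voronoi_cell_def indicator_def not_le)
    have c1: "voronoi_bound s' k j \<le> ereal (y + e)" using y Tj by simp
    have "ereal (y + e) < ereal (s' j)" using y by simp
    hence c2: "ereal (y + e) < voronoi_bound s' k (Suc j)" using voronoi_bound_less_point(2)[OF sm(2) j] by (rule less_trans)
    have c3: "ereal (y + e) < b" using \<open>ereal (y + e) < ereal (s' j)\<close> insj(4) by (rule less_trans)
    have "ereal tt' < ereal (y + e)" using y by simp
    hence c4: "a < ereal (y + e)" using att by (rule less_trans[rotated])
    have "density_on (voronoi_cell s' k j) (y + e) > 0" using c1 c2 c3 c4 Psi_pos by (simp add: density_on_def voronoi_cell_def)
    then show "\<not> density_on (voronoi_cell s' k j) (y + e) = \<Psi> (s' j) / \<Psi> (s j) * density_on (voronoi_cell s k j) y" using r by simp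
  qed
qed

lemma shifted_cell_right_bound:
  assumes j1: "Suc j < k"
  shows "(s' j + s' (Suc j))/2 - (s j + s (Suc j))/2 = s' j - s j"
proof (rule ccontr)
  define e where "e = s' j - s j"
  note AE = shifted_cell_AE[folded e_def]
  note sm = self_consistentD(1)[OF sc(1)] self_consistentD(1)[OF sc(2)]
  note ins = self_consistentD(2)[OF sc(1)] self_consistentD(2)[OF sc(2)]
  have insj: "a < ereal (s j)" "ereal (s j) < b" "a < ereal (s' j)" "ereal (s' j) < b" using ins j by auto
  have kpos: "\<Psi> (s' j) / \<Psi> (s j) > 0" using Psi_pos insj by simp
  define tt where "tt = (s j + s (Suc j))/2"
  define tt' where "tt' = (s' j + s' (Suc j))/2"
  assume "\<not> ?thesis"
  hence lt: "tt' - tt < e" using R[OF j1] unfolding tt_def tt'_def e_def by simp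
  have stt: "s j < tt" using strict_mono_on_lessThan_less[OF sm(1) _ j1, of j] unfolding tt_def by simp
  have ttb: "ereal tt < b" unfolding tt_def using ins[of j] ins[of "Suc j"] j1 j by (intro ereal_midpoint_less) auto
  have Tj: "voronoi_bound s k (Suc j) = ereal tt" "voronoi_bound s' k (Suc j) = ereal tt'" using j1 by (simp_all add: voronoi_bound_mid tt_def tt'_def)
  show False
  proof (rule AE_lborel_Ioo_contra[OF AE, of "max (tt' - e) (s j)" "tt"])
    show "max (tt' - e) (s j) < tt" using lt stt by simp
    fix y assume y: "max (tt' - e) (s j) < y" "y < tt"
    have "voronoi_bound s' k (Suc j) \<le> ereal (y + e)" using y Tj by simp
    hence l: "density_on (voronoi_cell s' k j) (y + e) = 0" by (simp add: density_on_def voronoi_cell_def indicator_def not_less)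
    have "ereal (s j) < ereal y" using y by simp
    hence c1: "voronoi_bound s k j \<le> ereal y" using voronoi_bound_less_point(1)[OF sm(1) j] by (meson less_trans less_imp_le)
    have c2: "ereal y < voronoi_bound s k (Suc j)" using y Tj by simp
    have c3: "a < ereal y" using insj(1) \<open>ereal (s j) < ereal y\<close> by (rule less_trans)
    have "ereal y < ereal tt" using y by simp
    hence c4: "ereal y < b" using ttb by (rule less_trans)
    have "density_on (voronoi_cell s k j) y > 0" using c1 c2 c3 c4 Psi_pos by (simp add: density_on_def voronoi_cell_def)
    hence "\<Psi> (s' j) / \<Psi> (s j) * density_on (voronoi_cell s k j) y > 0" by (rule mult_pos_pos[OF kpos])
    then show "\<not> density_on (voronoi_cell s' k j) (y + e) = \<Psi> (s' j) / \<Psi> (s j) * density_on (voronoi_cell s k j) y" using l by (metis less_irrefl)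
  qed
qed

lemma shifted_first_cell_lo_end:
  assumes j0: "j = 0" and es: "s j < s' j"
  shows "a = -\<infinity>"
proof (rule ccontr)
  define e where "e = s' j - s j"
  note AE = shifted_cell_AE[folded e_def]
  note sm = self_consistentD(1)[OF sc(1)] self_consistentD(1)[OF sc(2)]
  note ins = self_consistentD(2)[OF sc(1)] self_consistentD(2)[OF sc(2)]
  have insj: "a < ereal (s j)" "ereal (s j) < b" "a < ereal (s' j)" "ereal (s' j) < b" using ins j by auto
  have kpos: "\<Psi> (s' j) / \<Psi> (s j) > 0" using Psi_pos insj by simp
  assume an: "a \<noteq> -\<infinity>"
  have "a \<noteq> \<infinity>" using insj(1) by auto
  then obtain A where A: "a = ereal A" using an by (cases a) auto
  have ep: "0 < e" using es by (simp add: e_def)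
  have As: "A < s' j" using insj(3) A by simp
  show False
  proof (rule AE_lborel_Ioo_contra[OF AE, of "A - e" "min A (s' j - e)"])
    show "A - e < min A (s' j - e)" using ep As by simp
    fix y assume y: "A - e < y" "y < min A (s' j - e)"
    have "\<Psi> y = 0" using Psi_zero[of y] y A by auto
    hence r: "density_on (voronoi_cell s k j) y = 0" by (simp add: density_on_def)
    have "ereal (y + e) < ereal (s' j)" using y by simp
    hence c2: "ereal (y + e) < voronoi_bound s' k (Suc j)" using voronoi_bound_less_point(2)[OF sm(2) j] by (rule less_trans)
    have c3: "ereal (y + e) < b" using \<open>ereal (y + e) < ereal (s' j)\<close> insj(4) by (rule less_trans)
    have c4: "a < ereal (y + e)" using y A by simp
    have "density_on (voronoi_cell s' k j) (y + e) > 0" using c2 c3 c4 Psi_pos j0 by (simp add: density_on_def voronoi_cell_def)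
    then show "\<not> density_on (voronoi_cell s' k j) (y + e) = \<Psi> (s' j) / \<Psi> (s j) * density_on (voronoi_cell s k j) y" using r by simp
  qed
qed

lemma shifted_last_cell_hi_end:
  assumes j0: "Suc j = k" and es: "s j < s' j"
  shows "b = \<infinity>"
proof (rule ccontr)
  define e where "e = s' j - s j"
  note AE = shifted_cell_AE[folded e_def]
  note sm = self_consistentD(1)[OF sc(1)] self_consistentD(1)[OF sc(2)]
  note ins = self_consistentD(2)[OF sc(1)] self_consistentD(2)[OF sc(2)]
  have insj: "a < ereal (s j)" "ereal (s j) < b" "a < ereal (s' j)" "ereal (s' j) < b" using ins j by auto
  have kpos: "\<Psi> (s' j) / \<Psi> (s j) > 0" using Psi_pos insj by simp
  assume bn: "b \<noteq> \<infinity>"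
  have "b \<noteq> -\<infinity>" using insj(2) by auto
  then obtain B where B: "b = ereal B" using bn by (cases b) auto
  have ep: "0 < e" using es by (simp add: e_def)
  have sB: "s j < B" using insj(2) B by simp
  show False
  proof (rule AE_lborel_Ioo_contra[OF AE, of "max (B - e) (s j)" "B"])
    show "max (B - e) (s j) < B" using ep sB by simp
    fix y assume y: "max (B - e) (s j) < y" "y < B"
    have "\<Psi> (y + e) = 0" using Psi_zero[of "y + e"] y B by auto
    hence l: "density_on (voronoi_cell s' k j) (y + e) = 0" by (simp add: density_on_def)
    have "ereal (s j) < ereal y" using y by simp
    hence c1: "voronoi_bound s k j \<le> ereal y" using voronoi_bound_less_point(1)[OF sm(1) j] by (meson less_trans less_imp_le)
    have c2: "voronoi_bound s k (Suc j) = \<infinity>" using j0 by simp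
    have c3: "a < ereal y" using insj(1) \<open>ereal (s j) < ereal y\<close> by (rule less_trans)
    have c4: "ereal y < b" using y B by simp
    have "density_on (voronoi_cell s k j) y > 0" using c1 c2 c3 c4 Psi_pos by (simp add: density_on_def voronoi_cell_def)
    hence "\<Psi> (s' j) / \<Psi> (s j) * density_on (voronoi_cell s k j) y > 0" by (rule mult_pos_pos[OF kpos])
    then show "\<not> density_on (voronoi_cell s' k j) (y + e) = \<Psi> (s' j) / \<Psi> (s j) * density_on (voronoi_cell s k j) y" using l by (metis less_irrefl)
  qed
qed

end

lemma self_consistent_translate:
  assumes k: "2 \<le> k" and sc: "self_consistent k s" "self_consistent k s'"
    and d0: "s 0 + s 1 \<le> s' 0 + s' 1"
  shows "\<forall>i<k. s' i - s i = s' 0 - s 0"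
proof -
  define e where "e i = s' i - s i" for i
  have "\<forall>i<k. e i = e 0"
  proof (rule boundary_shift_rigidity[OF k, of e])
    show "0 \<le> (e 0 + e (Suc 0)) / 2" using d0 by (simp add: e_def)
  next
    fix j assume j: "Suc j < k" "0 \<le> e j" "0 < j \<Longrightarrow> (e (j - 1) + e (Suc (j - 1))) / 2 \<le> e j"
      "(e j + e (Suc j)) / 2 \<le> e j"
    have "j < k" "s j \<le> s' j" using j(1,2) by (simp_all add: e_def)
    moreover have "(s' (j-1) + s' j)/2 - (s (j-1) + s j)/2 \<le> s' j - s j" if "0 < j"
      using that j(3)[OF that] by (simp add: e_def field_simps)
    moreover have "(s' j + s' (Suc j))/2 - (s j + s (Suc j))/2 \<le> s' j - s j"
      using j(4) by (simp add: e_def field_simps)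
    ultimately have "(s' j + s' (Suc j))/2 - (s j + s (Suc j))/2 = s' j - s j"
      using shifted_cell_right_bound[OF sc, of j] j(1) by blast
    then show "(e j + e (Suc j)) / 2 = e j" by (simp add: e_def field_simps)
  next
    fix j assume j: "j < k" "0 < j" "0 \<le> e j" "(e (j - 1) + e (Suc (j - 1))) / 2 \<le> e j"
      "Suc j < k \<Longrightarrow> (e j + e (Suc j)) / 2 \<le> e j"
    have "s j \<le> s' j" using j(3) by (simp add: e_def)
    moreover have "(s' (j-1) + s' j)/2 - (s (j-1) + s j)/2 \<le> s' j - s j"
      using j(2,4) by (simp add: e_def field_simps)
    moreover have "(s' j + s' (Suc j))/2 - (s j + s (Suc j))/2 \<le> s' j - s j" if "Suc j < k"
      using j(5)[OF that] by (simp add: e_def field_simps)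
    ultimately have "(s' (j-1) + s' j)/2 - (s (j-1) + s j)/2 = s' j - s j"
      using shifted_cell_left_bound[OF sc j(1)] j(2) by blast
    then show "(e (j - 1) + e (Suc (j - 1))) / 2 = e j" using j(2) by (simp add: e_def field_simps)
  qed
  then show ?thesis unfolding e_def .
qed

lemma Gs_const_on_cell:
  assumes ainf: "a = -\<infinity>" and binf: "b = \<infinity>" and E: "0 < E"
    and AE: "AE y in lborel. y \<in> voronoi_cell s k j \<longrightarrow> \<Psi> (y + E) = \<kappa> * \<Psi> y"
    and y0: "voronoi_bound s k j < ereal y0" "ereal y0 < voronoi_bound s k (Suc j)"
  shows "Gs \<Psi> E y0 = \<kappa>"
proof -
  have Pp: "\<Psi> y > 0" for y using Psi_pos ainf binf by simp
  have Eb: "ereal E < b - a" using ainf binf by simp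
  obtain \<alpha> where al: "voronoi_bound s k j < ereal \<alpha>" "ereal \<alpha> < ereal y0" using ereal_dense2[OF y0(1)] by blast
  obtain \<beta> where be: "ereal y0 < ereal \<beta>" "ereal \<beta> < voronoi_bound s k (Suc j)" using ereal_dense2[OF y0(2)] by blast
  have ab': "\<alpha> < y0" "y0 < \<beta>" using al be by auto
  obtain y1 where y1: "\<alpha> < y1" "y1 < y0" "y1 \<in> voronoi_cell s k j \<longrightarrow> \<Psi> (y1 + E) = \<kappa> * \<Psi> y1"
    using AE_lborel_Ioo_ex[OF AE ab'(1)] by blast
  obtain y2 where y2: "y0 < y2" "y2 < \<beta>" "y2 \<in> voronoi_cell s k j \<longrightarrow> \<Psi> (y2 + E) = \<kappa> * \<Psi> y2"
    using AE_lborel_Ioo_ex[OF AE ab'(2)] by blast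
  have "ereal \<alpha> < ereal y1" "ereal y1 < ereal y0" using y1 by auto
  hence "voronoi_bound s k j \<le> ereal y1" "ereal y1 < voronoi_bound s k (Suc j)" using al y0 by (meson less_trans less_imp_le)+
  hence g1: "Gs \<Psi> E y1 = \<kappa>" using y1 Pp[of y1] by (simp add: voronoi_cell_def Gs_def)
  have "ereal y0 < ereal y2" "ereal y2 < ereal \<beta>" using y2 by auto
  hence "voronoi_bound s k j \<le> ereal y2" "ereal y2 < voronoi_bound s k (Suc j)" using be y0 by (meson less_trans less_imp_le)+
  hence g2: "Gs \<Psi> E y2 = \<kappa>" using y2 Pp[of y2] by (simp add: voronoi_cell_def Gs_def)
  have "Gs \<Psi> E y0 \<le> Gs \<Psi> E y1" using G_mono[OF E Eb, of y1 y0] y1 ainf binf by simp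
  moreover have "Gs \<Psi> E y2 \<le> Gs \<Psi> E y0" using G_mono[OF E Eb, of y0 y2] y2 ainf binf by simp
  ultimately show ?thesis using g1 g2 by simp
qed

lemma finite_range_Gs:
  assumes ainf: "a = -\<infinity>" and binf: "b = \<infinity>" and E: "0 < E" and sm: "strict_mono_on {..<k} s" and k0: "0 < k"
    and AE: "\<And>j. j < k \<Longrightarrow> AE y in lborel. y \<in> voronoi_cell s k j \<longrightarrow> \<Psi> (y + E) = \<kappa> j * \<Psi> y"
  shows "finite (Gs \<Psi> E ` UNIV)"
proof (rule finite_subset)
  show "Gs \<Psi> E ` UNIV \<subseteq> \<kappa> ` {..<k} \<union> (\<lambda>i. Gs \<Psi> E ((s (i - 1) + s i) / 2)) ` {1..<k}"
  proof
    fix g assume "g \<in> Gs \<Psi> E ` UNIV"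
    then obtain y where y: "g = Gs \<Psi> E y" by auto
    obtain j where j: "j < k" "y \<in> voronoi_cell s k j" using voronoi_cell_cover[OF sm k0] by blast
    show "g \<in> \<kappa> ` {..<k} \<union> (\<lambda>i. Gs \<Psi> E ((s (i - 1) + s i) / 2)) ` {1..<k}"
    proof (cases "voronoi_bound s k j = ereal y")
      case True
      hence j0: "0 < j" by (cases "j = 0") auto
      hence yeq: "y = (s (j - 1) + s j) / 2" using True j by (simp add: voronoi_bound_mid)
      have "g = (\<lambda>i. Gs \<Psi> E ((s (i - 1) + s i) / 2)) j" by (simp only: y yeq)
      moreover have "j \<in> {1..<k}" using j j0 by simp
      ultimately show ?thesis by blast
    next
      case False
      hence "voronoi_bound s k j < ereal y" "ereal y < voronoi_bound s k (Suc j)" using j unfolding voronoi_cell_def by auto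
      hence "Gs \<Psi> E y = \<kappa> j" by (intro Gs_const_on_cell[OF ainf binf E AE[OF j(1)]])
      then show ?thesis using y j by auto
    qed
  qed
qed auto

lemma self_consistent_not_translate:
  assumes sc: "self_consistent k s" "self_consistent k s'" and k0: "0 < k"
    and sh: "\<forall>i<k. s' i - s i = E" and E: "0 < E"
    and H: uniqueness_conditions
  shows False
proof -
  have eS: "s' j - s j = E" if "j < k" for j using sh that by blast
  have step: "AE y in lborel. density_on (voronoi_cell s' k j) (y + (s' j - s j)) = (\<Psi> (s' j) / \<Psi> (s j)) * density_on (voronoi_cell s k j) y"
    "j = 0 \<Longrightarrow> s j < s' j \<Longrightarrow> a = -\<infinity>" "Suc j = k \<Longrightarrow> s j < s' j \<Longrightarrow> b = \<infinity>" if j: "j < k" for j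
  proof -
    have e0: "s j \<le> s' j" using eS[OF j] E by simp
    have L: "(s' (j-1) + s' j)/2 - (s (j-1) + s j)/2 \<le> s' j - s j" if "0 < j"
      using eS[of "j - 1"] eS[OF j] that j by (simp add: field_simps)
    have R: "(s' j + s' (Suc j))/2 - (s j + s (Suc j))/2 \<le> s' j - s j" if "Suc j < k"
      using eS[of "Suc j"] eS[OF j] that by (simp add: field_simps)
    show "AE y in lborel. density_on (voronoi_cell s' k j) (y + (s' j - s j)) = (\<Psi> (s' j) / \<Psi> (s j)) * density_on (voronoi_cell s k j) y"
      by (rule shifted_cell_AE[OF sc j e0 L R])
    show "j = 0 \<Longrightarrow> s j < s' j \<Longrightarrow> a = -\<infinity>"
      by (rule shifted_first_cell_lo_end[OF sc j e0 L R])
    show "Suc j = k \<Longrightarrow> s j < s' j \<Longrightarrow> b = \<infinity>"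
      by (rule shifted_last_cell_hi_end[OF sc j e0 L R])
  qed
  have ainf: "a = -\<infinity>" using step(2)[OF k0] eS[OF k0] E by simp
  have k1: "k - 1 < k" "Suc (k - 1) = k" using k0 by auto
  have binf: "b = \<infinity>" using step(3)[OF k1(1) k1(2)] eS[OF k1(1)] E by simp
  define \<kappa> where "\<kappa> j = \<Psi> (s' j) / \<Psi> (s j)" for j
  have AE: "AE y in lborel. y \<in> voronoi_cell s k j \<longrightarrow> \<Psi> (y + E) = \<kappa> j * \<Psi> y" if j: "j < k" for j
    using step(1)[OF j]
  proof eventually_elim
    case (elim y)
    show ?case
    proof
      assume yc: "y \<in> voronoi_cell s k j"
      hence "y + E \<in> voronoi_cell s' k j" using voronoi_cell_shift[OF sh] by simp
      then show "\<Psi> (y + E) = \<kappa> j * \<Psi> y" using elim yc eS[OF j] by (simp add: density_on_def \<kappa>_def)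
    qed
  qed
  have fin: "finite (Gs \<Psi> E ` UNIV)" by (rule finite_range_Gs[OF ainf binf E self_consistentD(1)[OF sc(1)] k0 AE])
  then show False using uniqueness_conditions_finite_ratio_range[OF ainf binf E] H by blast
qed

lemma self_consistent_eq_if_ordered:
  assumes k0: "0 < k" and sc: "self_consistent k s" "self_consistent k s'"
    and d: "k = 1 \<Longrightarrow> s 0 \<le> s' 0" "2 \<le> k \<Longrightarrow> s 0 + s 1 \<le> s' 0 + s' 1"
    and H: uniqueness_conditions
  shows "\<forall>i<k. s' i = s i"
proof -
  define E where "E = s' 0 - s 0"
  have sh: "\<forall>i<k. s' i - s i = E"
  proof (cases "k = 1")
    case True then show ?thesis by (simp add: E_def)
  next
    case False
    then have k2: "2 \<le> k" using k0 by simp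
    show ?thesis unfolding E_def by (rule self_consistent_translate[OF k2 sc d(2)[OF k2]])
  qed
  have E0: "0 \<le> E"
  proof (cases "k = 1")
    case True then show ?thesis using d(1) by (simp add: E_def)
  next
    case False
    then have k2: "2 \<le> k" using k0 by simp
    then have "s' 1 - s 1 = E" using sh by simp
    then show ?thesis using d(2)[OF k2] by (simp add: E_def)
  qed
  have "E = 0"
  proof (rule ccontr)
    assume "E \<noteq> 0"
    then have "0 < E" using E0 by simp
    then show False by (rule self_consistent_not_translate[OF sc k0 sh _ H])
  qed
  then show ?thesis using sh by simp
qed

lemma optimal_unique:
  assumes V: "optimal k V" and W: "optimal k W" and H: uniqueness_conditions
  shows "V = W"
proof -
  define s where "s = sorted_enum V"
  define s' where "s' = sorted_enum W"
  have sc: "self_consistent k s" "self_consistent k s'"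
    using optimal_self_consistent[OF V] optimal_self_consistent[OF W] by (simp_all add: s_def s'_def)
  have k0: "0 < k" and im: "s ` {..<k} = V" "s' ` {..<k} = W"
    using optimal_sorted_enum[OF V] optimal_sorted_enum[OF W] by (simp_all add: s_def s'_def)
  have "\<forall>i<k. s' i = s i"
  proof (cases "(k = 1 \<longrightarrow> s 0 \<le> s' 0) \<and> (2 \<le> k \<longrightarrow> s 0 + s 1 \<le> s' 0 + s' 1)")
    case True
    then show ?thesis using self_consistent_eq_if_ordered[OF k0 sc _ _ H] by blast
  next
    case False
    then have "k = 1 \<Longrightarrow> s' 0 \<le> s 0" "2 \<le> k \<Longrightarrow> s' 0 + s' 1 \<le> s 0 + s 1" by auto
    then have "\<forall>i<k. s i = s' i" by (rule self_consistent_eq_if_ordered[OF k0 sc(2,1) _ _ H])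
    then show ?thesis by metis
  qed
  then have "s ` {..<k} = s' ` {..<k}" by (intro image_cong) auto
  then show ?thesis using im by simp
qed

end

section \<open>Best approximation by step functions\<close>

lemma integral_distr_density:
  fixes M :: "'a measure" and f :: "'a \<Rightarrow> real" and \<Psi> q :: "real \<Rightarrow> real"
  assumes fm: "f \<in> borel_measurable M" and dens: "distr M lborel f = density lborel (\<lambda>y. ennreal (\<Psi> y))"
    and Pm: "\<Psi> \<in> borel_measurable borel" and Pn: "\<And>y. 0 \<le> \<Psi> y" and qm: "q \<in> borel_measurable borel"
  shows "(\<integral>x. q (f x) \<partial>M) = (\<integral>y. \<Psi> y * q y \<partial>lborel)"
    and "integrable M (\<lambda>x. q (f x)) \<longleftrightarrow> integrable lborel (\<lambda>y. \<Psi> y * q y)"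
proof -
  have fm': "f \<in> measurable M lborel" using fm by simp
  have qm': "q \<in> borel_measurable lborel" using qm by simp
  have "(\<integral>x. q (f x) \<partial>M) = integral\<^sup>L (distr M lborel f) q" by (rule integral_distr[OF fm' qm', symmetric])
  also have "\<dots> = integral\<^sup>L (density lborel (\<lambda>y. ennreal (\<Psi> y))) q" by (simp add: dens)
  also have "\<dots> = (\<integral>y. \<Psi> y * q y \<partial>lborel)" using Pm Pn qm' by (subst integral_density) auto
  finally show "(\<integral>x. q (f x) \<partial>M) = (\<integral>y. \<Psi> y * q y \<partial>lborel)" .
  have "integrable M (\<lambda>x. q (f x)) \<longleftrightarrow> integrable (distr M lborel f) q" by (rule integrable_distr_eq[OF fm' qm', symmetric])
  also have "\<dots> \<longleftrightarrow> integrable (density lborel (\<lambda>y. ennreal (\<Psi> y))) q" by (simp add: dens)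
  also have "\<dots> \<longleftrightarrow> integrable lborel (\<lambda>y. \<Psi> y * q y)" using Pm Pn qm' by (subst integrable_density) auto
  finally show "integrable M (\<lambda>x. q (f x)) \<longleftrightarrow> integrable lborel (\<lambda>y. \<Psi> y * q y)" .
qed

lemma emeasure_vimage_density:
  fixes M :: "'a measure" and f :: "'a \<Rightarrow> real" and \<Psi> :: "real \<Rightarrow> real"
  assumes fm: "f \<in> borel_measurable M" and dens: "distr M lborel f = density lborel (\<lambda>y. ennreal (\<Psi> y))"
    and Pm: "\<Psi> \<in> borel_measurable borel" and A: "A \<in> sets borel"
  shows "emeasure M (f -` A \<inter> space M) = (\<integral>\<^sup>+ y. ennreal (\<Psi> y) * indicator A y \<partial>lborel)"
proof -
  have fm': "f \<in> measurable M lborel" using fm by simp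
  have "emeasure M (f -` A \<inter> space M) = emeasure (distr M lborel f) A" using A by (simp add: emeasure_distr[OF fm'])
  also have "\<dots> = emeasure (density lborel (\<lambda>y. ennreal (\<Psi> y))) A" by (simp add: dens)
  also have "\<dots> = (\<integral>\<^sup>+ y. ennreal (\<Psi> y) * indicator A y \<partial>lborel)" using A Pm by (subst emeasure_density) auto
  finally show ?thesis .
qed

lemma Sup_range_ereal: "Sup (range ereal) = \<infinity>"
proof -
  have "\<forall>x<top. \<exists>i\<in>range ereal. x < i"
  proof (intro allI impI)
    fix x :: ereal assume "x < top"
    hence "x < \<infinity>" by (simp add: top_ereal_def)
    then obtain r where "x < ereal r" using ereal_dense2[of x \<infinity>] by auto
    then show "\<exists>i\<in>range ereal. x < i" by blast
  qed
  then show ?thesis by (simp only: Sup_eq_top_iff top_ereal_def[symmetric])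
qed

lemma Inf_range_ereal: "Inf (range ereal) = -\<infinity>"
proof -
  have "\<forall>x>bot. \<exists>i\<in>range ereal. i < x"
  proof (intro allI impI)
    fix x :: ereal assume "bot < x"
    hence "-\<infinity> < x" by (simp add: bot_ereal_def)
    then obtain r where "ereal r < x" using ereal_dense2[of "-\<infinity>" x] by auto
    then show "\<exists>i\<in>range ereal. i < x" by blast
  qed
  then show ?thesis by (simp only: Inf_eq_bot_iff bot_ereal_def[symmetric])
qed

lemma lo_end_less_hi_end:
  fixes M :: "'a measure" and f :: "'a \<Rightarrow> real" and \<Psi> :: "real \<Rightarrow> real"
  assumes fin: "finite_measure M" and fm: "f \<in> borel_measurable M"
    and dens: "distr M lborel f = density lborel (\<lambda>y. ennreal (\<Psi> y))"
    and Pm: "\<Psi> \<in> borel_measurable borel"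
    and zero: "\<And>y. \<not> (lo_end M f < ereal y \<and> ereal y < hi_end M f) \<Longrightarrow> \<Psi> y = 0"
    and le: "lo_end M f \<le> hi_end M f"
  shows "lo_end M f < hi_end M f"
proof (rule ccontr)
  assume "\<not> ?thesis"
  hence eq: "lo_end M f = hi_end M f" using le by simp
  have z: "\<Psi> y = 0" for y
  proof (rule zero)
    show "\<not> (lo_end M f < ereal y \<and> ereal y < hi_end M f)" using eq by (auto dest: less_trans)
  qed
  have "emeasure M (f -` UNIV \<inter> space M) = (\<integral>\<^sup>+ y. ennreal (\<Psi> y) * indicator UNIV y \<partial>lborel)"
    by (rule emeasure_vimage_density[OF fm dens Pm]) simp
  also have "\<dots> = 0" by (simp add: z)
  finally have "emeasure M (space M) = 0" by simp
  hence mz: "measure M (space M) = 0" by (simp add: measure_def)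
  have cdf0: "cdf_of M f z = 0" for z
  proof -
    have s: "{\<omega> \<in> space M. f \<omega> \<le> z} \<in> sets M" using fm by measurable
    have "cdf_of M f z \<le> measure M (space M)" unfolding cdf_of_def
      by (rule finite_measure.finite_measure_mono[OF fin _ sets.top]) auto
    moreover have "0 \<le> cdf_of M f z" unfolding cdf_of_def by simp
    ultimately show ?thesis using mz by simp
  qed
  have "lo_end M f = \<infinity>" unfolding lo_end_def using cdf0 Sup_range_ereal by simp
  moreover have "hi_end M f = -\<infinity>" unfolding hi_end_def using cdf0 mz Inf_range_ereal by simp
  ultimately show False using le by simp
qed

lemma Gpk_finite_range:
  assumes h: "h \<in> Gpk M k" and ne: "space M \<noteq> {}"
  shows "\<exists>W. finite W \<and> W \<noteq> {} \<and> card W \<le> k \<and> (\<forall>x\<in>space M. h x \<in> W) \<and> h \<in> borel_measurable M"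
proof -
  obtain l A a where l: "l \<le> k" and A: "\<forall>i<l. A i \<in> sets M" and dis: "disjoint_family_on A {..<l}"
    and un: "(\<Union>i<l. A i) = space M" and hx: "\<forall>x\<in>space M. h x = (\<Sum>i<l. (a i :: real) * indicator (A i) x)"
    using h unfolding Gpk_def by blast
  define W where "W = a ` {..<l}"
  have val: "h x \<in> W" if x: "x \<in> space M" for x
  proof -
    obtain j where j: "j < l" "x \<in> A j" using x un by blast
    have "(\<Sum>i<l. a i * indicator (A i) x) = (\<Sum>i<l. if i = j then a i else 0)"
    proof (rule sum.cong)
      fix i assume "i \<in> {..<l}"
      show "a i * indicator (A i) x = (if i = j then a i else 0)"
      proof (cases "i = j")
        case False
        hence "A i \<inter> A j = {}" using dis \<open>i \<in> {..<l}\<close> j(1) unfolding disjoint_family_on_def by auto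
        then show ?thesis using j False by (auto simp: indicator_def)
      qed (use j in simp)
    qed simp
    also have "\<dots> = a j" using j by (simp add: sum.delta)
    finally show ?thesis using hx x j unfolding W_def by auto
  qed
  have "W \<noteq> {}" using ne val by blast
  moreover have "card W \<le> k" unfolding W_def using card_image_le[of "{..<l}" a] l by simp
  moreover have "h \<in> borel_measurable M"
  proof -
    have "(\<lambda>x. \<Sum>i<l. a i * indicator (A i) x) \<in> borel_measurable M"
    proof (intro borel_measurable_sum borel_measurable_times borel_measurable_const)
      fix i assume "i \<in> {..<l}"
      then show "indicator (A i) \<in> borel_measurable M" using A by (intro borel_measurable_indicator) auto
    qed
    then show ?thesis using hx by (subst measurable_cong[where g="\<lambda>x. \<Sum>i<l. a i * indicator (A i) x"]) auto
  qed
  ultimately show ?thesis using val unfolding W_def by blast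
qed

lemma in_Lp_integrable_diff_bounded:
  assumes fin: "finite_measure M" and p: "0 \<le> p" and f: "in_Lp M p f" and hm: "h \<in> borel_measurable M"
    and B: "\<And>x. x \<in> space M \<Longrightarrow> \<bar>h x\<bar> \<le> B"
  shows "integrable M (\<lambda>x. \<bar>f x - h x\<bar> powr p)"
proof (rule Bochner_Integration.integrable_bound)
  have fm: "f \<in> borel_measurable M" and fi: "integrable M (\<lambda>x. \<bar>f x\<bar> powr p)" using f by (auto simp: in_Lp_def)
  show "integrable M (\<lambda>x. 2 powr p * (\<bar>f x\<bar> powr p + \<bar>B\<bar> powr p))"
    using fi finite_measure.integrable_const[OF fin] by (intro integrable_mult_right Bochner_Integration.integrable_add) auto
  show "(\<lambda>x. \<bar>f x - h x\<bar> powr p) \<in> borel_measurable M" using fm hm by measurable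
  show "AE x in M. norm (\<bar>f x - h x\<bar> powr p) \<le> norm (2 powr p * (\<bar>f x\<bar> powr p + \<bar>B\<bar> powr p))"
  proof (rule AE_I2)
    fix x assume x: "x \<in> space M"
    have "\<bar>f x - h x\<bar> \<le> \<bar>f x\<bar> + \<bar>B\<bar>" using B[OF x] by linarith
    hence "\<bar>f x - h x\<bar> powr p \<le> (\<bar>f x\<bar> + \<bar>B\<bar>) powr p" using p by (intro powr_mono2) auto
    also have "\<dots> \<le> 2 powr p * (\<bar>f x\<bar> powr p + \<bar>B\<bar> powr p)" using p by (intro powr_sum_le) auto
    finally show "norm (\<bar>f x - h x\<bar> powr p) \<le> norm (2 powr p * (\<bar>f x\<bar> powr p + \<bar>B\<bar> powr p))" by simp
  qed
qed

lemma nearest_point_step_function: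
  fixes f :: "'a \<Rightarrow> real"
  assumes f: "f \<in> borel_measurable M" and V: "finite V" "V \<noteq> {}" "card V \<le> k"
  shows "\<exists>g\<in>Gpk M k. \<forall>x\<in>space M. g x \<in> V \<and> \<bar>f x - g x\<bar> = infdist (f x) V"
proof -
  define n where "n = card V"
  define v where "v = sorted_enum V"
  have n0: "0 < n" using V by (simp add: n_def card_gt_0_iff)
  have sm: "strict_mono_on {..<n} v" and vV: "v ` {..<n} = V"
    using sorted_enum_enumerates[OF V(1)] by (simp_all add: v_def n_def)
  define A where "A i = f -` voronoi_cell v n i \<inter> space M" for i
  define g where "g x = (\<Sum>i<n. v i * indicator (A i) x)" for x
  have A_sets: "A i \<in> sets M" for i unfolding A_def by (rule measurable_sets[OF f voronoi_cell_borel])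
  have g_nearest: "g x \<in> V \<and> \<bar>f x - g x\<bar> = infdist (f x) V" if x: "x \<in> space M" for x
  proof -
    obtain i where i: "i < n" "f x \<in> voronoi_cell v n i" using voronoi_cell_cover[OF sm n0] by blast
    have "g x = (\<Sum>j<n. v j * indicator (voronoi_cell v n j) (f x))"
      unfolding g_def A_def using x by (intro sum.cong) (auto simp: indicator_def)
    also have "\<dots> = v i" by (rule sum_voronoi_cell_indicator[OF sm i(2,1)])
    finally show ?thesis using infdist_voronoi_cell[OF sm i(2,1)] i vV by auto
  qed
  have "g \<in> Gpk M k" unfolding Gpk_def
  proof (intro CollectI exI[of _ n] exI[of _ A] exI[of _ v] conjI)
    show "n \<le> k" using V(3) by (simp add: n_def)
    show "\<forall>i<n. A i \<in> sets M" using A_sets by simp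
    show "disjoint_family_on A {..<n}"
      unfolding disjoint_family_on_def A_def using voronoi_cell_unique[OF sm] by auto
    show "(\<Union>i<n. A i) = space M"
    proof
      show "space M \<subseteq> (\<Union>i<n. A i)" unfolding A_def using voronoi_cell_cover[OF sm n0] by fast
    qed (auto simp: A_def)
  qed (simp add: g_def)
  then show ?thesis using g_nearest by blast
qed

lemma powr_le_powr_iff_base:
  fixes x y q :: real assumes "0 \<le> x" "0 \<le> y" "0 < q"
  shows "x powr q \<le> y powr q \<longleftrightarrow> x \<le> y"
  using assms by (meson not_le powr_less_mono2 powr_mono2 less_imp_le)

lemma powr_eq_powr_iff_base:
  fixes x y q :: real assumes "0 \<le> x" "0 \<le> y" "0 < q"
  shows "x powr q = y powr q \<longleftrightarrow> x = y"
  using powr_le_powr_iff_base[OF assms] powr_le_powr_iff_base[OF assms(2,1,3)] by auto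

lemma Lp_norm_le_iff:
  assumes "0 < p"
  shows "Lp_norm M p u \<le> Lp_norm M p v \<longleftrightarrow> (\<integral>x. \<bar>u x\<bar> powr p \<partial>M) \<le> (\<integral>x. \<bar>v x\<bar> powr p \<partial>M)"
  unfolding Lp_norm_def using assms by (intro powr_le_powr_iff_base integral_nonneg_AE AE_I2) auto

lemma Lp_norm_eq_iff:
  assumes "0 < p"
  shows "Lp_norm M p u = Lp_norm M p v \<longleftrightarrow> (\<integral>x. \<bar>u x\<bar> powr p \<partial>M) = (\<integral>x. \<bar>v x\<bar> powr p \<partial>M)"
  unfolding Lp_norm_def using assms by (intro powr_eq_powr_iff_base integral_nonneg_AE AE_I2) auto

locale distribution_quantization = monotone_ratio_quantization +
  fixes M :: "'m measure" and f :: "'m \<Rightarrow> real"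
  assumes finite_M: "finite_measure M"
    and f_measurable[measurable]: "f \<in> borel_measurable M"
    and distr_f: "distr M lborel f = density lborel (\<lambda>y. ennreal (\<Psi> y))"
begin

lemmas integral_comp_f = integral_distr_density[OF f_measurable distr_f Psi_meas Psi_nonneg]

lemma f_in_Lp: "in_Lp M p f"
  using integral_comp_f(2)[of "\<lambda>y. \<bar>y\<bar> powr p"] Psi_mom by (simp add: in_Lp_def mult.commute)

lemma space_nonempty: "space M \<noteq> {}"
proof
  assume "space M = {}"
  then have "measure M (space M) = 0" by simp
  moreover have "measure M (space M) = (\<integral>y. \<Psi> y \<partial>lborel)" using integral_comp_f(1)[of "\<lambda>_. 1"] by simp
  ultimately show False using integral_Psi_pos by simp
qed

lemma quant_error_eq_integral: "quant_error W = (\<integral>x. infdist (f x) W powr p \<partial>M)"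
  using integral_comp_f(1)[of "\<lambda>y. infdist y W powr p"] by (simp add: quant_error_def mult.commute)

lemma integrable_infdist_f: "w \<in> W \<Longrightarrow> integrable M (\<lambda>x. infdist (f x) W powr p)"
  using integral_comp_f(2)[of "\<lambda>y. infdist y W powr p"] integrable_quant_error by (simp add: mult.commute)

lemma AE_eq_if_nearest:
  assumes V: "finite V"
    and g: "\<And>x. x \<in> space M \<Longrightarrow> g x \<in> V \<and> \<bar>f x - g x\<bar> = infdist (f x) V"
    and h: "AE x in M. h x \<in> V \<and> \<bar>f x - h x\<bar> = infdist (f x) V"
  shows "AE x in M. h x = g x"
proof -
  \<comment> \<open>two distinct nearest points of V to f x are equidistant from it\<close>
  define Z where "Z = (\<lambda>(u, w). (u + w) / 2) ` (V \<times> V)"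
  have Z: "finite Z" "Z \<in> sets borel" using V by (simp_all add: Z_def finite_imp_closed borel_closed)
  have "emeasure M (f -` Z \<inter> space M) = (\<integral>\<^sup>+ y. ennreal (\<Psi> y) * indicator Z y \<partial>lborel)"
    by (rule emeasure_vimage_density[OF f_measurable distr_f Psi_meas Z(2)])
  also have "\<dots> = (\<integral>\<^sup>+ (y :: real). 0 \<partial>lborel)"
  proof (rule nn_integral_cong_AE)
    show "AE y in lborel. ennreal (\<Psi> y) * indicator Z y = 0"
      using AE_not_in[OF finite_imp_null_set_lborel[OF Z(1)]] by eventually_elim simp
  qed
  finally have "f -` Z \<inter> space M \<in> null_sets M" using measurable_sets[OF f_measurable Z(2)] by auto
  then have "AE x in M. f x \<notin> Z" by (rule AE_I') auto
  with h AE_space show ?thesis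
  proof eventually_elim
    case (elim x)
    have hx: "h x \<in> V" "\<bar>f x - h x\<bar> = infdist (f x) V" and fx: "f x \<notin> Z" using elim by auto
    have gx: "g x \<in> V" "\<bar>f x - g x\<bar> = infdist (f x) V" using g elim by auto
    show "h x = g x"
    proof (rule ccontr)
      assume "h x \<noteq> g x"
      moreover have "\<bar>f x - h x\<bar> = \<bar>f x - g x\<bar>" using hx gx by simp
      ultimately have "f x = (h x + g x) / 2" by (auto simp: abs_if split: if_splits)
      then have "f x \<in> Z" unfolding Z_def using hx(1) gx(1) by force
      then show False using fx by simp
    qed
  qed
qed

lemma optimal_step_function:
  assumes V: "optimal k V" and g: "\<And>x. x \<in> space M \<Longrightarrow> g x \<in> V \<and> \<bar>f x - g x\<bar> = infdist (f x) V"
    and H: uniqueness_conditions and h: "h \<in> Gpk M k"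
  shows "(\<integral>x. \<bar>f x - g x\<bar> powr p \<partial>M) \<le> (\<integral>x. \<bar>f x - h x\<bar> powr p \<partial>M)"
    and "(\<integral>x. \<bar>f x - h x\<bar> powr p \<partial>M) = (\<integral>x. \<bar>f x - g x\<bar> powr p \<partial>M) \<Longrightarrow> AE x in M. h x = g x"
proof -
  obtain W where W: "codebook k W" "\<forall>x\<in>space M. h x \<in> W" and hm: "h \<in> borel_measurable M"
    using Gpk_finite_range[OF h space_nonempty] unfolding codebook_def by blast
  obtain w where w: "w \<in> W" using W(1) by (auto simp: codebook_def)
  have h_bounded: "\<bar>h x\<bar> \<le> Max (abs ` W)" if "x \<in> space M" for x
    using W that by (intro Max_ge) (auto simp: codebook_def)
  have int_h: "integrable M (\<lambda>x. \<bar>f x - h x\<bar> powr p)"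
    using in_Lp_integrable_diff_bounded[OF finite_M _ f_in_Lp hm h_bounded] p1 by simp
  have dist_W_le: "infdist (f x) W powr p \<le> \<bar>f x - h x\<bar> powr p" if "x \<in> space M" for x
    using that W(2) p1 infdist_le[of "h x" W "f x"]
    by (intro powr_mono2) (auto simp: dist_real_def infdist_nonneg)
  have W_le: "quant_error W \<le> (\<integral>x. \<bar>f x - h x\<bar> powr p \<partial>M)" unfolding quant_error_eq_integral
    by (intro integral_mono_AE[OF integrable_infdist_f[OF w] int_h] AE_I2) (use dist_W_le in auto)
  have V_le: "quant_error V \<le> quant_error W" using V W(1) by (simp add: optimal_def)
  have g_cost: "(\<integral>x. \<bar>f x - g x\<bar> powr p \<partial>M) = quant_error V"
    unfolding quant_error_eq_integral by (intro Bochner_Integration.integral_cong) (simp_all add: g)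
  show "(\<integral>x. \<bar>f x - g x\<bar> powr p \<partial>M) \<le> (\<integral>x. \<bar>f x - h x\<bar> powr p \<partial>M)" using W_le V_le g_cost by simp
  assume eq: "(\<integral>x. \<bar>f x - h x\<bar> powr p \<partial>M) = (\<integral>x. \<bar>f x - g x\<bar> powr p \<partial>M)"
  have "quant_error W = quant_error V" using V_le W_le eq g_cost by simp
  then have "optimal k W" using W(1) V by (simp add: optimal_def)
  then have WV: "W = V" using optimal_unique[OF _ V H] by blast
  have "(\<integral>x. \<bar>f x - h x\<bar> powr p - infdist (f x) W powr p \<partial>M) = 0"
    using eq g_cost WV Bochner_Integration.integral_diff[OF int_h integrable_infdist_f[OF w]]
    by (simp add: quant_error_eq_integral)
  then have "AE x in M. \<bar>f x - h x\<bar> powr p - infdist (f x) W powr p = 0"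
    using int_h integrable_infdist_f[OF w] dist_W_le
    by (subst (asm) integral_nonneg_eq_0_iff_AE) (auto intro: AE_I2)
  then have "AE x in M. h x \<in> V \<and> \<bar>f x - h x\<bar> = infdist (f x) V"
    using AE_space
  proof eventually_elim
    case (elim x)
    then have "\<bar>f x - h x\<bar> powr p = infdist (f x) V powr p" using WV by simp
    then have "\<bar>f x - h x\<bar> = infdist (f x) V" using p1 by (simp add: powr_eq_powr_iff_base infdist_nonneg)
    then show ?case using W(2) WV elim by auto
  qed
  then show "AE x in M. h x = g x"
    using AE_eq_if_nearest[OF _ g] V by (simp add: optimal_def codebook_def)
qed


theorem unique_best_step_approximation:
  assumes "0 < k" and H: uniqueness_conditions
  shows "\<exists>g\<in>Gpk M k. (\<forall>h\<in>Gpk M k. Lp_norm M p (\<lambda>x. f x - g x) \<le> Lp_norm M p (\<lambda>x. f x - h x))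
           \<and> (\<forall>h\<in>Gpk M k. Lp_norm M p (\<lambda>x. f x - h x) = Lp_norm M p (\<lambda>x. f x - g x)
                  \<longrightarrow> (AE x in M. h x = g x))"
proof -
  obtain V where V: "optimal k V" using optimal_exists[OF assms(1)] by blast
  then have "finite V" "V \<noteq> {}" "card V \<le> k" by (simp_all add: optimal_def codebook_def)
  from nearest_point_step_function[OF f_measurable this] obtain g
    where g: "g \<in> Gpk M k" "\<And>x. x \<in> space M \<Longrightarrow> g x \<in> V \<and> \<bar>f x - g x\<bar> = infdist (f x) V"
    by blast
  have p0: "0 < p" using p1 by simp
  show ?thesis
  proof (intro bexI[OF _ g(1)] conjI ballI impI)
    fix h assume "h \<in> Gpk M k"
    then show "Lp_norm M p (\<lambda>x. f x - g x) \<le> Lp_norm M p (\<lambda>x. f x - h x)"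
      using optimal_step_function(1)[OF V g(2) H] by (simp add: Lp_norm_le_iff[OF p0])
  next
    fix h assume "h \<in> Gpk M k" "Lp_norm M p (\<lambda>x. f x - h x) = Lp_norm M p (\<lambda>x. f x - g x)"
    then show "AE x in M. h x = g x"
      using optimal_step_function(2)[OF V g(2) H] by (simp add: Lp_norm_eq_iff[OF p0])
  qed
qed

end

lemma integrable_density_moment:
  fixes f :: "'a \<Rightarrow> real"
  assumes fin: "finite_measure M" and f: "in_Lp M p f"
    and dens: "distr M lborel f = density lborel (\<lambda>y. ennreal (\<Psi> y))"
    and \<Psi>: "\<Psi> \<in> borel_measurable borel" "\<And>y. 0 \<le> \<Psi> y"
  shows "integrable lborel \<Psi>" and "integrable lborel (\<lambda>y. \<bar>y\<bar> powr p * \<Psi> y)"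
proof -
  have fm: "f \<in> borel_measurable M" using f by (simp add: in_Lp_def)
  have "integrable M (\<lambda>x. (\<lambda>_. 1 :: real) (f x))" using finite_measure.integrable_const[OF fin, of "1 :: real"] by simp
  then show "integrable lborel \<Psi>" using integral_distr_density(2)[OF fm dens \<Psi>, of "\<lambda>_. 1"] by simp
  have "integrable M (\<lambda>x. (\<lambda>y. \<bar>y\<bar> powr p) (f x))" using f by (simp add: in_Lp_def)
  then have "integrable lborel (\<lambda>y. \<Psi> y * \<bar>y\<bar> powr p)"
    using integral_distr_density(2)[OF fm dens \<Psi>, of "\<lambda>y. \<bar>y\<bar> powr p"] by simp
  then show "integrable lborel (\<lambda>y. \<bar>y\<bar> powr p * \<Psi> y)" by (simp add: mult.commute)
qed

theorem theorem2p8: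
  fixes M :: "'a measure" and p :: real and f :: "'a \<Rightarrow> real" and \<Psi> :: "real \<Rightarrow> real"
  defines "a \<equiv> lo_end M f" and "b \<equiv> hi_end M f"
  assumes fin: "finite_measure M"
    and p: "1 \<le> p"
    and fLp: "in_Lp M p f"
    and ab: "a \<le> b"
    and \<Psi>_meas: "\<Psi> \<in> borel_measurable borel"
    and density: "distr M lborel f = density lborel (\<lambda>y. ennreal (\<Psi> y))"
    and \<Psi>_pos: "\<And>y. a < ereal y \<Longrightarrow> ereal y < b \<Longrightarrow> \<Psi> y > 0"
    and \<Psi>_zero: "\<And>y. \<not> (a < ereal y \<and> ereal y < b) \<Longrightarrow> \<Psi> y = 0"
    and G_mono: "\<And>s y z. 0 < s \<Longrightarrow> ereal s < b - a \<Longrightarrow> a < ereal y \<Longrightarrow> y \<le> z \<Longrightarrow>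
                   ereal z < b \<Longrightarrow> Gs \<Psi> s z \<le> Gs \<Psi> s y"
    and H: "(\<bar>a\<bar> \<noteq> \<infinity> \<or> \<bar>b\<bar> \<noteq> \<infinity>)
            \<or> (\<forall>s. 0 < s \<and> ereal s < b - a \<longrightarrow> infinite (Gs \<Psi> s ` {y. a < ereal y \<and> ereal y < b}))
            \<or> continuous_on UNIV \<Psi>"
  shows "\<forall>k::nat. k \<ge> 1 \<longrightarrow>
           (\<exists>g\<in>Gpk M k. (\<forall>h\<in>Gpk M k. Lp_norm M p (\<lambda>x. f x - g x) \<le> Lp_norm M p (\<lambda>x. f x - h x))
              \<and> (\<forall>h\<in>Gpk M k. Lp_norm M p (\<lambda>x. f x - h x) = Lp_norm M p (\<lambda>x. f x - g x)
                     \<longrightarrow> (AE x in M. h x = g x)))"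
proof -
  have fm: "f \<in> borel_measurable M" using fLp by (simp add: in_Lp_def)
  have \<Psi>_nonneg: "0 \<le> \<Psi> y" for y
    using \<Psi>_pos[of y] \<Psi>_zero[of y] by (cases "a < ereal y \<and> ereal y < b") auto
  have "a < b"
    using lo_end_less_hi_end[OF fin fm density \<Psi>_meas] \<Psi>_zero ab unfolding a_def b_def by blast
  interpret Q: distribution_quantization p \<Psi> a b M f
    using p \<Psi>_meas \<Psi>_pos \<Psi>_zero integrable_density_moment[OF fin fLp density \<Psi>_meas \<Psi>_nonneg]
      \<open>a < b\<close> G_mono fm density finite_measure.finite_emeasure_space[OF fin]
      sigma_finite_measure.sigma_finite_countable[OF finite_measure.axioms(1)[OF fin]]
    by unfold_locales
  have H': Q.uniqueness_conditions using H unfolding Q.uniqueness_conditions_def .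
  show ?thesis by (intro allI impI Q.unique_best_step_approximation[OF _ H']) simp
qed

end
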